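(* Let $L$ be a Skolem-free first-order language, $T$ an $L$ theory and $\Gamma$ a set of $L$ formulas. Then $\mathrm{GSI}^\omega_\Gamma(\mathit{sk}^\exists(T))$ is inconsistent if and only if $T+\mathrm{IND}(\Gamma)$ is inconsistent.
   Context: Skolem symbols $\mathfrak{s}_{Qx\varphi}$: for each formula $Qx\varphi$ ($Q\in\{\forall,\exists\}$) a new function symbol of arity $|\mathrm{FV}(Qx\varphi)|$; $L$ is Skolem-free if it contains none of the Skolem symbols obtainable (iteratively) over $L$. $\mathit{sk}^\exists$/$\mathit{sk}^\forall$: $\mathit{sk}^Q$ fixes atoms, commutes with $\wedge,\vee$, $\mathit{sk}^Q(\neg A)=\neg\mathit{sk}^{\overline Q}(A)$, $\mathit{sk}^Q(QxA(x,\vec y))=\mathit{sk}^Q(A(\mathfrak{s}_{QxA}(\vec y),\vec y))$ with $\vec y$ exactly the free variables of $QxA$, $\mathit{sk}^Q(\overline QxA)=\overline Qx\,\mathit{sk}^Q(A)$; elementwise on theories. $I_x\varphi=\forall\vec z(\varphi(0,\vec z)\wedge\forall x(\varphi(x,\vec z)\to\varphi(s(x),\vec z))\to\forall x\varphi(x,\vec z))$, $\mathrm{IND}(\Gamma)=\{I_x\gamma:\gamma\in\Gamma\}$. $\Gamma\downarrow L'=\{\gamma(\vec x,t_1,\dots,t_n):\gamma(\vec x,z_1,\dots,z_n)\in\Gamma,\ t_i$ ground $L'$ terms$\}$; $\Delta^-$ = formulas of $\Delta$ with at most one free variable; $\mathrm{GSI}_\Gamma(T)=T+\mathit{sk}^\exists(\mathrm{IND}((\Gamma\downarrow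 L(T))^-))$, $\mathrm{GSI}^\omega_\Gamma(T)=\bigcup_i\mathrm{GSI}^i_\Gamma(T)$. *)

theory Defs
  imports Main
begin

text \<open>Variables are natural numbers (de Bruijn indices; a quantifier binds index 0).
  Function symbols are either ordinary symbols \<open>Sym f\<close> or Skolem symbols
  \<open>Sk Q A\<close>, the Skolem symbol of the quantified formula \<open>Q A\<close> (i.e. \<open>QxA\<close>).
  A function/predicate symbol together with its arity is a language symbol.\<close>

datatype quant = QAll | QEx

datatype ('f, 'p) tm = Var nat | Fn "('f, 'p) sym" "('f, 'p) tm list"
and ('f, 'p) sym = Sym 'f | Sk quant "('f, 'p) fm"
and ('f, 'p) fm =
    Atom 'p "('f, 'p) tm list"
  | Eq "('f, 'p) tm" "('f, 'p) tm"
  | Neg "('f, 'p) fm"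
  | Conj "('f, 'p) fm" "('f, 'p) fm"
  | Disj "('f, 'p) fm" "('f, 'p) fm"
  | All "('f, 'p) fm"
  | Ex "('f, 'p) fm"

definition Imp :: "('f, 'p) fm \<Rightarrow> ('f, 'p) fm \<Rightarrow> ('f, 'p) fm" where
  "Imp A B = Disj (Neg A) B"

fun qf :: "quant \<Rightarrow> ('f, 'p) fm \<Rightarrow> ('f, 'p) fm" where
  "qf QAll A = All A"
| "qf QEx A = Ex A"

fun dual :: "quant \<Rightarrow> quant" where
  "dual QAll = QEx"
| "dual QEx = QAll"

datatype ('f, 'p) lsym = FS "('f, 'p) sym" nat | PS 'p nat

fun fv_tm :: "('f, 'p) tm \<Rightarrow> nat set" where
  "fv_tm (Var n) = {n}"
| "fv_tm (Fn f ts) = (\<Union>t\<in>set ts. fv_tm t)"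

fun fv :: "('f, 'p) fm \<Rightarrow> nat set" where
  "fv (Atom p ts) = (\<Union>t\<in>set ts. fv_tm t)"
| "fv (Eq s t) = fv_tm s \<union> fv_tm t"
| "fv (Neg A) = fv A"
| "fv (Conj A B) = fv A \<union> fv B"
| "fv (Disj A B) = fv A \<union> fv B"
| "fv (All A) = {n. Suc n \<in> fv A}"
| "fv (Ex A) = {n. Suc n \<in> fv A}"

fun syms_tm :: "('f, 'p) tm \<Rightarrow> ('f, 'p) lsym set" where
  "syms_tm (Var n) = {}"
| "syms_tm (Fn f ts) = insert (FS f (length ts)) (\<Union>t\<in>set ts. syms_tm t)"

fun syms :: "('f, 'p) fm \<Rightarrow> ('f, 'p) lsym set" where
  "syms (Atom p ts) = insert (PS p (length ts)) (\<Union>t\<in>set ts. syms_tm t)"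
| "syms (Eq s t) = syms_tm s \<union> syms_tm t"
| "syms (Neg A) = syms A"
| "syms (Conj A B) = syms A \<union> syms B"
| "syms (Disj A B) = syms A \<union> syms B"
| "syms (All A) = syms A"
| "syms (Ex A) = syms A"

definition is_L_formula :: "('f, 'p) lsym set \<Rightarrow> ('f, 'p) fm \<Rightarrow> bool" where
  "is_L_formula L A \<longleftrightarrow> syms A \<subseteq> L"

definition is_L_theory :: "('f, 'p) lsym set \<Rightarrow> ('f, 'p) fm set \<Rightarrow> bool" where
  "is_L_theory L T \<longleftrightarrow> (\<forall>A\<in>T. is_L_formula L A \<and> fv A = {})"

definition ground_L_term :: "('f, 'p) lsym set \<Rightarrow> ('f, 'p) tm \<Rightarrow> bool" where
  "ground_L_term L t \<longleftrightarrow> fv_tm t = {} \<and> syms_tm t \<subseteq> L"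

fun subst_tm :: "(nat \<Rightarrow> ('f, 'p) tm) \<Rightarrow> ('f, 'p) tm \<Rightarrow> ('f, 'p) tm" where
  "subst_tm \<sigma> (Var n) = \<sigma> n"
| "subst_tm \<sigma> (Fn f ts) = Fn f (map (subst_tm \<sigma>) ts)"

definition lift_tm :: "('f, 'p) tm \<Rightarrow> ('f, 'p) tm" where
  "lift_tm t = subst_tm (\<lambda>n. Var (Suc n)) t"

definition up :: "(nat \<Rightarrow> ('f, 'p) tm) \<Rightarrow> nat \<Rightarrow> ('f, 'p) tm" where
  "up \<sigma> n = (case n of 0 \<Rightarrow> Var 0 | Suc m \<Rightarrow> lift_tm (\<sigma> m))"

fun subst :: "(nat \<Rightarrow> ('f, 'p) tm) \<Rightarrow> ('f, 'p) fm \<Rightarrow> ('f, 'p) fm" where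
  "subst \<sigma> (Atom p ts) = Atom p (map (subst_tm \<sigma>) ts)"
| "subst \<sigma> (Eq s t) = Eq (subst_tm \<sigma> s) (subst_tm \<sigma> t)"
| "subst \<sigma> (Neg A) = Neg (subst \<sigma> A)"
| "subst \<sigma> (Conj A B) = Conj (subst \<sigma> A) (subst \<sigma> B)"
| "subst \<sigma> (Disj A B) = Disj (subst \<sigma> A) (subst \<sigma> B)"
| "subst \<sigma> (All A) = All (subst (up \<sigma>) A)"
| "subst \<sigma> (Ex A) = Ex (subst (up \<sigma>) A)"

definition scons :: "('f, 'p) tm \<Rightarrow> (nat \<Rightarrow> ('f, 'p) tm) \<Rightarrow> nat \<Rightarrow> ('f, 'p) tm" where
  "scons t \<sigma> n = (case n of 0 \<Rightarrow> t | Suc m \<Rightarrow> \<sigma> m)"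

text \<open>\<open>inst t A\<close>: for \<open>QxA\<close> represented by \<open>qf Q A\<close>, this is \<open>A(t)\<close>.\<close>
definition inst :: "('f, 'p) tm \<Rightarrow> ('f, 'p) fm \<Rightarrow> ('f, 'p) fm" where
  "inst t A = subst (scons t Var) A"

definition lift :: "('f, 'p) fm \<Rightarrow> ('f, 'p) fm" where
  "lift A = subst (\<lambda>n. Var (Suc n)) A"

fun fsize :: "('f, 'p) fm \<Rightarrow> nat" where
  "fsize (Atom p ts) = 1"
| "fsize (Eq s t) = 1"
| "fsize (Neg A) = Suc (fsize A)"
| "fsize (Conj A B) = Suc (fsize A + fsize B)"
| "fsize (Disj A B) = Suc (fsize A + fsize B)"
| "fsize (All A) = Suc (fsize A)"
| "fsize (Ex A) = Suc (fsize A)"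

lemma fsize_subst[simp]: "fsize (subst \<sigma> A) = fsize A"
  by (induction \<sigma> A rule: subst.induct) auto

lemma fsize_inst[simp]: "fsize (inst t A) = fsize A"
  by (simp add: inst_def)

text \<open>The Skolem term \<open>\<s>_{QxA}(y\<^sub>1,\<dots>,y\<^sub>n)\<close>, where \<open>y\<^sub>1 < \<dots> < y\<^sub>n\<close> are exactly
  the free variables of \<open>QxA\<close>; its arity is \<open>|FV(QxA)|\<close>.\<close>
definition sk_term :: "quant \<Rightarrow> ('f, 'p) fm \<Rightarrow> ('f, 'p) tm" where
  "sk_term Q A = Fn (Sk Q A) (map Var (sorted_list_of_set (fv (qf Q A))))"

function sk :: "quant \<Rightarrow> ('f, 'p) fm \<Rightarrow> ('f, 'p) fm" where
  "sk Q (Atom p ts) = Atom p ts"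
| "sk Q (Eq s t) = Eq s t"
| "sk Q (Conj A B) = Conj (sk Q A) (sk Q B)"
| "sk Q (Disj A B) = Disj (sk Q A) (sk Q B)"
| "sk Q (Neg A) = Neg (sk (dual Q) A)"
| "sk Q (All A) = (if Q = QAll then sk Q (inst (sk_term QAll A) A) else All (sk Q A))"
| "sk Q (Ex A) = (if Q = QEx then sk Q (inst (sk_term QEx A) A) else Ex (sk Q A))"
  by pat_completeness auto
termination
  by (relation "measure (\<lambda>(Q, A). fsize A)") auto

definition sk_ex :: "('f, 'p) fm set \<Rightarrow> ('f, 'p) fm set" where
  "sk_ex T = sk QEx ` T"

inductive_set sk_syms :: "('f, 'p) lsym set \<Rightarrow> ('f, 'p) lsym set" for L where
  "\<forall>s\<in>syms (qf Q A). s \<in> L \<or> s \<in> sk_syms L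
   \<Longrightarrow> FS (Sk Q A) (card (fv (qf Q A))) \<in> sk_syms L"

definition skolem_free :: "('f, 'p) lsym set \<Rightarrow> bool" where
  "skolem_free L \<longleftrightarrow> L \<inter> sk_syms L = {}"

definition zero_tm :: "'f \<Rightarrow> ('f, 'p) tm" where
  "zero_tm z = Fn (Sym z) []"

definition suc_tm :: "'f \<Rightarrow> ('f, 'p) tm \<Rightarrow> ('f, 'p) tm" where
  "suc_tm s t = Fn (Sym s) [t]"

fun alls :: "nat \<Rightarrow> ('f, 'p) fm \<Rightarrow> ('f, 'p) fm" where
  "alls 0 A = A"
| "alls (Suc k) A = All (alls k A)"

text \<open>\<open>I_x \<phi>\<close> = \<open>\<forall>z\<^sub>1\<dots>z\<^sub>k (\<phi>(0,z) \<and> \<forall>x(\<phi>(x,z) \<rightarrow> \<phi>(s(x),z)) \<rightarrow> \<forall>x \<phi>(x,z))\<close>,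
  where \<open>z\<^sub>1 < \<dots> < z\<^sub>k\<close> are the free variables of \<open>\<phi>\<close> other than \<open>x\<close>.
  We first rename \<open>x\<close> to index 0 and \<open>z\<^sub>i\<close> to index \<open>i\<close>.\<close>
definition ind_ax :: "'f \<Rightarrow> 'f \<Rightarrow> nat \<Rightarrow> ('f, 'p) fm \<Rightarrow> ('f, 'p) fm" where
  "ind_ax z s x \<phi> =
    (let zs = sorted_list_of_set (fv \<phi> - {x});
         k = length zs;
         \<rho> = (\<lambda>v. if v = x then Var 0
                   else if v \<in> set zs then Var (Suc (card {u\<in>set zs. u < v}))
                   else Var v);
         \<psi> = subst \<rho> \<phi>
     in alls k (Imp (Conj (inst (zero_tm z) \<psi>)
                          (All (Imp \<psi> (subst (scons (suc_tm s (Var 0)) (\<lambda>n. Var (Suc n))) \<psi>))))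
                    (All \<psi>)))"

definition IND :: "'f \<Rightarrow> 'f \<Rightarrow> ('f, 'p) fm set \<Rightarrow> ('f, 'p) fm set" where
  "IND z s \<Gamma> = {ind_ax z s x \<gamma> | x \<gamma>. \<gamma> \<in> \<Gamma>}"

text \<open>\<open>\<Gamma>\<down>L'\<close>: instances of formulas of \<Gamma> in which some free variables are
  replaced by ground \<open>L'\<close> terms (the others are kept).\<close>
definition ground_inst :: "('f, 'p) fm set \<Rightarrow> ('f, 'p) lsym set \<Rightarrow> ('f, 'p) fm set" where
  "ground_inst \<Gamma> L' = {subst \<sigma> \<gamma> | \<sigma> \<gamma>. \<gamma> \<in> \<Gamma> \<and> (\<forall>v. \<sigma> v = Var v \<or> ground_L_term L' (\<sigma> v))}"

definition at_most_one_fv :: "('f, 'p) fm set \<Rightarrow> ('f, 'p) fm set" where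
  "at_most_one_fv \<Delta> = {A \<in> \<Delta>. card (fv A) \<le> 1}"

text \<open>A theory is represented together with its language: \<open>(L(T), T)\<close>.
  One GSI step; the language grows by the symbols of the new axioms.\<close>
definition GSI_step :: "'f \<Rightarrow> 'f \<Rightarrow> ('f, 'p) fm set
    \<Rightarrow> ('f, 'p) lsym set \<times> ('f, 'p) fm set \<Rightarrow> ('f, 'p) lsym set \<times> ('f, 'p) fm set" where
  "GSI_step z s \<Gamma> LT =
    (let N = sk_ex (IND z s (at_most_one_fv (ground_inst \<Gamma> (fst LT))))
     in (fst LT \<union> (\<Union>A\<in>N. syms A), snd LT \<union> N))"

definition GSI_omega :: "'f \<Rightarrow> 'f \<Rightarrow> ('f, 'p) fm set
    \<Rightarrow> ('f, 'p) lsym set \<times> ('f, 'p) fm set \<Rightarrow> ('f, 'p) fm set" where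
  "GSI_omega z s \<Gamma> LT = (\<Union>i. snd ((GSI_step z s \<Gamma> ^^ i) LT))"

definition sk_ex_theory :: "('f, 'p) lsym set \<Rightarrow> ('f, 'p) fm set
    \<Rightarrow> ('f, 'p) lsym set \<times> ('f, 'p) fm set" where
  "sk_ex_theory L T = (L \<union> (\<Union>A\<in>sk_ex T. syms A), sk_ex T)"

text \<open>Propositional evaluation, prime formulas (atoms, equations, quantified
  formulas) get arbitrary truth values.\<close>
fun peval :: "(('f, 'p) fm \<Rightarrow> bool) \<Rightarrow> ('f, 'p) fm \<Rightarrow> bool" where
  "peval v (Neg A) = (\<not> peval v A)"
| "peval v (Conj A B) = (peval v A \<and> peval v B)"
| "peval v (Disj A B) = (peval v A \<or> peval v B)"
| "peval v A = v A"

definition tautology :: "('f, 'p) fm \<Rightarrow> bool" where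
  "tautology A \<longleftrightarrow> (\<forall>v. peval v A)"

text \<open>A Hilbert-style calculus for first-order logic with equality
  (formulas of a theory are read as universally closed).\<close>
inductive prov :: "('f, 'p) fm set \<Rightarrow> ('f, 'p) fm \<Rightarrow> bool" for T where
  hyp: "A \<in> T \<Longrightarrow> prov T A"
| taut: "tautology A \<Longrightarrow> prov T A"
| mp: "prov T (Imp A B) \<Longrightarrow> prov T A \<Longrightarrow> prov T B"
| gen: "prov T A \<Longrightarrow> prov T (All A)"
| all_inst: "prov T (Imp (All A) (inst t A))"
| all_dist: "prov T (Imp (All (Imp A B)) (Imp (All A) (All B)))"
| vac: "prov T (Imp A (All (lift A)))"
| ex_def1: "prov T (Imp (Ex A) (Neg (All (Neg A))))"
| ex_def2: "prov T (Imp (Neg (All (Neg A))) (Ex A))"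
| eq_refl: "prov T (Eq t t)"
| eq_leib: "prov T (Imp (Eq s t) (Imp (inst s A) (inst t A)))"

definition inconsistent :: "('f, 'p) fm set \<Rightarrow> bool" where
  "inconsistent T \<longleftrightarrow> (\<exists>A. prov T A \<and> prov T (Neg A))"

end

theory Submission
  imports Defs
begin

(* Both directions are proved semantically, with term models of maximal consistent sets.

   If T + IND(Gamma) is consistent, then so is its extension by all Henkin axioms
   Ex B --> B(c), whose witness c is the nullary Skolem symbol of Ex B: as L is Skolem-free,
   the witness of a largest B is fresh, and the theorem on constants applies. The term model
   of a maximal consistent extension satisfies T + IND(Gamma). Reinterpreting each Skolem
   symbol outside L as a choice function for its formula makes sk^Ex(A) hold whenever A does;
   since IND(Gamma) holds under all assignments, the model satisfies sk^Ex(T) and the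
   Skolemized induction axioms of all ground instances, i.e. GSI^omega(sk^Ex(T)).

   Conversely, every axiom of GSI^omega(sk^Ex(T)) is universal, so it holds in the term model
   of any maximal consistent extension, witnesses or not. That model satisfies T because
   sk^Ex(A) implies A. It satisfies I_x gamma because an assignment is given by ground terms,
   which use finitely many symbols and so belong to some stage; substituting them into gamma
   leaves at most x free, so the induction axiom of this instance is added at the next stage. *)

text \<open>Terms, symbols and formulas are mutually recursive, as Skolem symbols contain formulas;
  these induction rules treat symbols as atomic.\<close>

lemma tm_induct[case_names Var Fn]:
  assumes "\<And>n. P (Var n)" "\<And>f ts. (\<And>t. t \<in> set ts \<Longrightarrow> P t) \<Longrightarrow> P (Fn f ts)"
  shows "P t"
  by (rule tm.induct[of P "\<lambda>_. True" "\<lambda>_. True"]) (auto intro: assms)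

lemma fm_induct[case_names Atom Eq Neg Conj Disj All Ex]:
  assumes "\<And>p ts. P (Atom p ts)" "\<And>s t. P (Eq s t)" "\<And>A. P A \<Longrightarrow> P (Neg A)"
    "\<And>A B. P A \<Longrightarrow> P B \<Longrightarrow> P (Conj A B)" "\<And>A B. P A \<Longrightarrow> P B \<Longrightarrow> P (Disj A B)"
    "\<And>A. P A \<Longrightarrow> P (All A)" "\<And>A. P A \<Longrightarrow> P (Ex A)"
  shows "P A"
  by (rule fm.induct[of "\<lambda>_. True" "\<lambda>_. True" P]) (auto intro: assms)

lemma finite_fv_tm[simp]: "finite (fv_tm t)"
  by (induction t rule: tm_induct) auto

lemma finite_fv[simp]: "finite (fv A)"
  by (induction A rule: fm_induct) (auto intro!: finite_vimageI[of _ Suc, unfolded vimage_def])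

lemma finite_fv_All[simp]: "finite {n. Suc n \<in> fv A}"
  using finite_fv[of "All A"] by simp

lemma finite_syms_tm: "finite (syms_tm t)"
  by (induction t rule: tm_induct) auto

lemma fv_Imp[simp]: "fv (Imp A B) = fv A \<union> fv B"
  and syms_Imp[simp]: "syms (Imp A B) = syms A \<union> syms B"
  by (simp_all add: Imp_def)

lemma fv_qf[simp]: "fv (qf Q A) = fv (All A)"
  and syms_qf[simp]: "syms (qf Q A) = syms A"
  by (cases Q; simp)+

lemma fv_alls: "fv (alls k A) = {n. n + k \<in> fv A}"
  by (induction k) auto

lemma syms_alls[simp]: "syms (alls k A) = syms A"
  by (induction k) auto

lemma scons_0[simp]: "scons t \<sigma> 0 = t"
  and scons_Suc[simp]: "scons t \<sigma> (Suc n) = \<sigma> n"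
  by (simp_all add: scons_def)

lemma up_Var: "up Var = Var"
  by (rule ext) (simp add: up_def lift_tm_def split: nat.split)

lemma subst_tm_id: "(\<And>n. n \<in> fv_tm t \<Longrightarrow> \<sigma> n = Var n) \<Longrightarrow> subst_tm \<sigma> t = t"
  by (induction t rule: tm_induct) (auto intro: map_idI)

lemma up_id: "(\<And>n. Suc n \<in> fv A \<Longrightarrow> \<sigma> n = Var n) \<Longrightarrow> n \<in> fv A \<Longrightarrow> up \<sigma> n = Var n"
  by (auto simp: up_def lift_tm_def split: nat.split)

lemma subst_id: "(\<And>n. n \<in> fv A \<Longrightarrow> \<sigma> n = Var n) \<Longrightarrow> subst \<sigma> A = A"
  by (induction A arbitrary: \<sigma> rule: fm_induct) (auto intro: map_idI subst_tm_id up_id)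

lemma subst_tm_comp: "subst_tm \<sigma> (subst_tm \<tau> t) = subst_tm (\<lambda>n. subst_tm \<sigma> (\<tau> n)) t"
  by (induction t rule: tm_induct) auto

lemma fv_tm_subst: "fv_tm (subst_tm \<sigma> t) = (\<Union>n\<in>fv_tm t. fv_tm (\<sigma> n))"
  by (induction t rule: tm_induct) auto

lemma fv_subst: "fv (subst \<sigma> A) = (\<Union>n\<in>fv A. fv_tm (\<sigma> n))"
proof -
  have up: "Suc n \<in> fv_tm (up \<sigma> m) \<longleftrightarrow> (\<exists>k. m = Suc k \<and> n \<in> fv_tm (\<sigma> k))" for \<sigma> :: "nat \<Rightarrow> ('f, 'p) tm" and n m
    by (cases m) (auto simp: up_def lift_tm_def fv_tm_subst)
  show ?thesis
    by (induction A arbitrary: \<sigma> rule: fm_induct) (auto simp: fv_tm_subst up)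
qed

lemma syms_tm_subst: "syms_tm (subst_tm \<sigma> t) = syms_tm t \<union> (\<Union>n\<in>fv_tm t. syms_tm (\<sigma> n))"
  by (induction t rule: tm_induct) auto

lemma syms_subst: "syms (subst \<sigma> A) = syms A \<union> (\<Union>n\<in>fv A. syms_tm (\<sigma> n))"
proof -
  have up: "syms_tm (up \<sigma> m) = (case m of 0 \<Rightarrow> {} | Suc k \<Rightarrow> syms_tm (\<sigma> k))" for \<sigma> :: "nat \<Rightarrow> ('f, 'p) tm" and m
    by (cases m) (auto simp: up_def lift_tm_def syms_tm_subst)
  show ?thesis
    by (induction A arbitrary: \<sigma> rule: fm_induct) (auto simp: syms_tm_subst up split: nat.splits)
qed

lemma fv_inst: "fv (inst t A) = (if 0 \<in> fv A then fv_tm t else {}) \<union> fv (All A)"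
  by (auto simp: inst_def fv_subst scons_def split: nat.splits)

lemma syms_inst: "syms (inst t A) = syms A \<union> (if 0 \<in> fv A then syms_tm t else {})"
  by (auto simp: inst_def syms_subst scons_def split: nat.splits)

lemma inst_Neg: "inst t (Neg A) = Neg (inst t A)"
  by (simp add: inst_def)

lemma lift_closed: "fv A = {} \<Longrightarrow> lift A = A"
  unfolding lift_def by (rule subst_id) simp

lemma size_syms_tm: "FS f n \<in> syms_tm t \<Longrightarrow> size f < size t"
proof (induction t rule: tm_induct)
  case (Fn g ts)
  show ?case
  proof (cases "FS f n = FS g (length ts)")
    case False
    then obtain t where "t \<in> set ts" "FS f n \<in> syms_tm t" using Fn.prems by auto
    then have "size f < size_list size ts"
      using Fn.IH by (intro size_list_estimation) auto
    then show ?thesis by simp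
  qed simp
qed simp

lemma size_syms: "FS f n \<in> syms A \<Longrightarrow> size f < size A"
proof (induction A rule: fm_induct)
  case (Atom p ts)
  then obtain t where "t \<in> set ts" "FS f n \<in> syms_tm t" by auto
  then have "size f < size_list size ts"
    using size_syms_tm by (intro size_list_estimation) auto
  then show ?case by simp
qed (auto dest: size_syms_tm)

section \<open>Semantics\<close>

primrec tval :: "(('f, 'p) sym \<Rightarrow> 'u list \<Rightarrow> 'u) \<Rightarrow> (nat \<Rightarrow> 'u) \<Rightarrow> ('f, 'p) tm \<Rightarrow> 'u" where
  "tval F e (Var n) = e n"
| "tval F e (Fn f ts) = F f (map (tval F e) ts)"

primrec sat :: "'u set \<Rightarrow> (('f, 'p) sym \<Rightarrow> 'u list \<Rightarrow> 'u) \<Rightarrow> ('p \<Rightarrow> 'u list \<Rightarrow> bool)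
    \<Rightarrow> (nat \<Rightarrow> 'u) \<Rightarrow> ('f, 'p) fm \<Rightarrow> bool" where
  "sat D F P e (Atom p ts) = P p (map (tval F e) ts)"
| "sat D F P e (Eq s t) = (tval F e s = tval F e t)"
| "sat D F P e (Neg A) = (\<not> sat D F P e A)"
| "sat D F P e (Conj A B) = (sat D F P e A \<and> sat D F P e B)"
| "sat D F P e (Disj A B) = (sat D F P e A \<or> sat D F P e B)"
| "sat D F P e (All A) = (\<forall>d\<in>D. sat D F P (case_nat d e) A)"
| "sat D F P e (Ex A) = (\<exists>d\<in>D. sat D F P (case_nat d e) A)"

definition is_structure :: "'u set \<Rightarrow> (('f, 'p) sym \<Rightarrow> 'u list \<Rightarrow> 'u) \<Rightarrow> bool" where
  "is_structure D F \<longleftrightarrow> D \<noteq> {} \<and> (\<forall>f xs. set xs \<subseteq> D \<longrightarrow> F f xs \<in> D)"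

definition models :: "'u set \<Rightarrow> (('f, 'p) sym \<Rightarrow> 'u list \<Rightarrow> 'u) \<Rightarrow> ('p \<Rightarrow> 'u list \<Rightarrow> bool)
    \<Rightarrow> ('f, 'p) fm \<Rightarrow> bool" where
  "models D F P A \<longleftrightarrow> (\<forall>e. range e \<subseteq> D \<longrightarrow> sat D F P e A)"

lemma tval_subst: "tval F e (subst_tm \<sigma> t) = tval F (\<lambda>n. tval F e (\<sigma> n)) t"
  by (induction t rule: tm_induct) (simp_all cong: map_cong)

lemma tval_lift: "tval F (case_nat d e) (lift_tm t) = tval F e t"
  by (simp add: lift_tm_def tval_subst)

lemma tval_up: "(\<lambda>n. tval F (case_nat d e) (up \<sigma> n)) = case_nat d (\<lambda>n. tval F e (\<sigma> n))"
  by (rule ext) (simp add: up_def tval_lift split: nat.split)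

lemma sat_subst: "sat D F P e (subst \<sigma> A) = sat D F P (\<lambda>n. tval F e (\<sigma> n)) A"
  by (induction A arbitrary: e \<sigma> rule: fm_induct) (auto simp: tval_subst tval_up comp_def)

lemma sat_inst: "sat D F P e (inst t A) = sat D F P (case_nat (tval F e t) e) A"
proof -
  have "(\<lambda>n. tval F e (scons t Var n)) = case_nat (tval F e t) e"
    by (rule ext) (simp add: scons_def split: nat.split)
  then show ?thesis by (simp add: inst_def sat_subst)
qed

lemma sat_lift: "sat D F P (case_nat d e) (lift A) = sat D F P e A"
  by (simp add: lift_def sat_subst)

lemma sat_Imp[simp]: "sat D F P e (Imp A B) = (sat D F P e A \<longrightarrow> sat D F P e B)"
  by (simp add: Imp_def)

lemma tval_cong:
  assumes "\<And>n. n \<in> fv_tm t \<Longrightarrow> e n = e' n"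
    and "\<And>f xs. FS f (length xs) \<in> syms_tm t \<Longrightarrow> F f xs = F' f xs"
  shows "tval F e t = tval F' e' t"
  using assms
proof (induction t rule: tm_induct)
  case (Fn f ts)
  have "tval F e t = tval F' e' t" if "t \<in> set ts" for t
    using that Fn.prems by (intro Fn.IH) fastforce+
  then have "map (tval F e) ts = map (tval F' e') ts" by simp
  then show ?case using Fn.prems(2)[of f "map (tval F' e') ts"] by (simp del: map_eq_conv)
qed simp

lemma sat_cong:
  assumes "\<And>n. n \<in> fv A \<Longrightarrow> e n = e' n"
    and "\<And>f xs. FS f (length xs) \<in> syms A \<Longrightarrow> F f xs = F' f xs"
  shows "sat D F P e A = sat D F' P e' A"
  using assms
proof (induction A arbitrary: e e' rule: fm_induct)
  case (Atom p ts)
  then have "map (tval F e) ts = map (tval F' e') ts"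
    by (intro map_cong refl tval_cong) (use Atom.prems in force)+
  then show ?case by (simp del: map_eq_conv)
next
  case (All A)
  have "sat D F P (case_nat d e) A = sat D F' P (case_nat d e') A" for d
    using All.prems by (intro All.IH) (auto split: nat.split)
  then show ?case by simp
next
  case (Ex A)
  have "sat D F P (case_nat d e) A = sat D F' P (case_nat d e') A" for d
    using Ex.prems by (intro Ex.IH) (auto split: nat.split)
  then show ?case by simp
next
  case (Eq s t)
  have "tval F e s = tval F' e' s" "tval F e t = tval F' e' t"
    using Eq.prems by (intro tval_cong; simp)+
  then show ?case by simp
qed auto

lemma sat_cong_env: "(\<And>n. n \<in> fv A \<Longrightarrow> e n = e' n) \<Longrightarrow> sat D F P e A = sat D F P e' A"
  by (rule sat_cong) auto

lemma tval_in_dom: "is_structure D F \<Longrightarrow> range e \<subseteq> D \<Longrightarrow> tval F e t \<in> D"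
proof (induction t rule: tm_induct)
  case (Fn f ts)
  then have "set (map (tval F e) ts) \<subseteq> D" by auto
  then show ?case using Fn.prems by (simp add: is_structure_def)
qed auto

lemma range_case_nat: "range e \<subseteq> D \<Longrightarrow> d \<in> D \<Longrightarrow> range (case_nat d e) \<subseteq> D"
  by (fastforce split: nat.split)

lemma peval_sat: "peval (sat D F P e) A = sat D F P e A"
  by (induction A rule: fm_induct) auto

theorem prov_sound:
  assumes "prov T A" "is_structure D F" "\<forall>B\<in>T. models D F P B"
  shows "models D F P A"
  using assms(1)
proof induction
  case (taut A)
  then show ?case by (auto simp: models_def tautology_def peval_sat[symmetric])
next
  case (gen A)
  then show ?case by (auto simp: models_def range_case_nat[simplified])
next
  case (all_inst A t)
  then show ?case using assms(2) by (auto simp: models_def sat_inst tval_in_dom)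
next
  case (vac A)
  then show ?case by (auto simp: models_def sat_lift)
qed (use assms in \<open>auto simp: models_def sat_inst\<close>)

corollary consistent_if_model:
  assumes "is_structure D F" "\<forall>B\<in>T. models D F P B"
  shows "\<not> inconsistent T"
proof
  assume "inconsistent T"
  then obtain A where "prov T A" "prov T (Neg A)" by (auto simp: inconsistent_def)
  then have "models D F P A" "models D F P (Neg A)" using prov_sound assms by blast+
  moreover obtain d where "d \<in> D" using assms(1) by (auto simp: is_structure_def)
  ultimately show False by (auto simp: models_def dest: spec[of _ "\<lambda>_. d"])
qed

lemma prov_mono: "prov T A \<Longrightarrow> T \<subseteq> T' \<Longrightarrow> prov T' A"
  by (induction rule: prov.induct) (auto intro: prov.intros)

lemma prov_finite_support: "prov T A \<Longrightarrow> \<exists>T0\<subseteq>T. finite T0 \<and> prov T0 A"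
proof (induction rule: prov.induct)
  case (hyp A)
  then show ?case by (intro exI[of _ "{A}"]) (auto intro: prov.hyp)
next
  case (mp A B)
  then obtain T1 T2 where "T1 \<subseteq> T" "finite T1" "prov T1 (Imp A B)" "T2 \<subseteq> T" "finite T2" "prov T2 A"
    by blast
  then show ?case by (intro exI[of _ "T1 \<union> T2"]) (auto intro: prov.mp prov_mono)
qed (auto intro: prov.intros)

lemma prov_taut_consequence: "prov T A \<Longrightarrow> tautology (Imp A B) \<Longrightarrow> prov T B"
  by (meson prov.mp prov.taut)

lemma prov_taut_consequence2: "prov T A \<Longrightarrow> prov T B \<Longrightarrow> tautology (Imp A (Imp B C)) \<Longrightarrow> prov T C"
  by (meson prov.mp prov.taut)

lemma inconsistentI: "prov T A \<Longrightarrow> prov T (Neg A) \<Longrightarrow> inconsistent T"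
  by (auto simp: inconsistent_def)

lemma inconsistent_prov: "inconsistent T \<Longrightarrow> prov T A"
  unfolding inconsistent_def by (auto intro: prov_taut_consequence2 simp: tautology_def Imp_def)

lemma inconsistent_mono: "inconsistent T \<Longrightarrow> T \<subseteq> T' \<Longrightarrow> inconsistent T'"
  by (auto simp: inconsistent_def intro: prov_mono)

lemma inconsistent_finite_subset: "inconsistent T \<Longrightarrow> \<exists>T0\<subseteq>T. finite T0 \<and> inconsistent T0"
proof -
  assume "inconsistent T"
  then obtain A where "prov T A" "prov T (Neg A)" by (auto simp: inconsistent_def)
  then obtain T1 T2 where "T1 \<subseteq> T" "finite T1" "prov T1 A" "T2 \<subseteq> T" "finite T2" "prov T2 (Neg A)"
    using prov_finite_support by metis
  then show ?thesis by (intro exI[of _ "T1 \<union> T2"]) (auto intro: inconsistentI prov_mono)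
qed

theorem deduction:
  assumes "fv B = {}"
  shows "prov (insert B T) C \<Longrightarrow> prov T (Imp B C)"
proof (induction rule: prov.induct)
  case (hyp A)
  then show ?case
    by (auto intro: prov.taut prov_taut_consequence prov.hyp simp: tautology_def Imp_def)
next
  case (mp A C)
  then show ?case by (auto intro: prov_taut_consequence2 simp: tautology_def Imp_def)
next
  case (gen A)
  have "prov T (Imp (All (Imp B A)) (Imp (All B) (All A)))" by (rule prov.all_dist)
  then have "prov T (Imp (All B) (All A))" using gen.IH by (auto intro: prov.mp prov.gen)
  moreover have "prov T (Imp B (All B))" using prov.vac[of T B] by (simp add: lift_closed assms)
  ultimately show ?case by (auto intro: prov_taut_consequence2 simp: tautology_def Imp_def)
qed (auto intro: prov_taut_consequence prov.intros simp: tautology_def Imp_def)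

lemma prov_Neg_if_inconsistent_insert:
  assumes "fv B = {}" "inconsistent (insert B T)"
  shows "prov T (Neg B)"
proof -
  have "prov T (Imp B (Neg B))" using assms by (intro deduction inconsistent_prov)
  then show ?thesis by (rule prov_taut_consequence) (simp add: tautology_def Imp_def)
qed

primrec csubst_tm :: "('f, 'p) sym \<Rightarrow> (nat \<Rightarrow> ('f, 'p) tm) \<Rightarrow> ('f, 'p) tm \<Rightarrow> ('f, 'p) tm \<Rightarrow> ('f, 'p) tm"
where
  "csubst_tm c \<sigma> u (Var n) = \<sigma> n"
| "csubst_tm c \<sigma> u (Fn f ts) = (if f = c \<and> ts = [] then u else Fn f (map (csubst_tm c \<sigma> u) ts))"

primrec csubst :: "('f, 'p) sym \<Rightarrow> (nat \<Rightarrow> ('f, 'p) tm) \<Rightarrow> ('f, 'p) tm \<Rightarrow> ('f, 'p) fm \<Rightarrow> ('f, 'p) fm"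
where
  "csubst c \<sigma> u (Atom p ts) = Atom p (map (csubst_tm c \<sigma> u) ts)"
| "csubst c \<sigma> u (Eq s t) = Eq (csubst_tm c \<sigma> u s) (csubst_tm c \<sigma> u t)"
| "csubst c \<sigma> u (Neg A) = Neg (csubst c \<sigma> u A)"
| "csubst c \<sigma> u (Conj A B) = Conj (csubst c \<sigma> u A) (csubst c \<sigma> u B)"
| "csubst c \<sigma> u (Disj A B) = Disj (csubst c \<sigma> u A) (csubst c \<sigma> u B)"
| "csubst c \<sigma> u (All A) = All (csubst c (up \<sigma>) (lift_tm u) A)"
| "csubst c \<sigma> u (Ex A) = Ex (csubst c (up \<sigma>) (lift_tm u) A)"

lemma csubst_tm_self: "csubst_tm c \<sigma> (Fn c []) t = subst_tm \<sigma> t"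
  by (induction t rule: tm_induct) auto

lemma csubst_self: "csubst c \<sigma> (Fn c []) A = subst \<sigma> A"
  by (induction A arbitrary: \<sigma> rule: fm_induct) (auto simp: csubst_tm_self lift_tm_def)

lemma csubst_tm_comp:
  "csubst_tm c \<sigma> u (csubst_tm c \<tau> w t) = csubst_tm c (\<lambda>n. csubst_tm c \<sigma> u (\<tau> n)) (csubst_tm c \<sigma> u w) t"
  by (induction t rule: tm_induct) auto

lemma lift_tm_as_csubst: "lift_tm t = csubst_tm c (\<lambda>n. Var (Suc n)) (Fn c []) t"
  by (simp add: lift_tm_def csubst_tm_self)

lemma csubst_tm_lift: "csubst_tm c (up \<sigma>) (lift_tm u) (lift_tm t) = lift_tm (csubst_tm c \<sigma> u t)"
proof -
  have "csubst_tm c (up \<sigma>) (lift_tm u) (lift_tm t)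
      = csubst_tm c (\<lambda>n. csubst_tm c (up \<sigma>) (lift_tm u) (Var (Suc n)))
          (csubst_tm c (up \<sigma>) (lift_tm u) (Fn c [])) t"
    by (simp only: lift_tm_as_csubst[of t c] csubst_tm_comp)
  also have "\<dots> = csubst_tm c (\<lambda>n. lift_tm (\<sigma> n)) (lift_tm u) t"
    by (simp add: up_def)
  also have "\<dots> = lift_tm (csubst_tm c \<sigma> u t)"
    by (simp only: lift_tm_as_csubst[of _ c] csubst_tm_comp)
  finally show ?thesis .
qed

lemma csubst_comp:
  "csubst c \<sigma> u (csubst c \<tau> w A) = csubst c (\<lambda>n. csubst_tm c \<sigma> u (\<tau> n)) (csubst_tm c \<sigma> u w) A"
proof -
  have up: "(\<lambda>n. csubst_tm c (up \<sigma>) (lift_tm u) (up \<tau> n)) = up (\<lambda>n. csubst_tm c \<sigma> u (\<tau> n))"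
    for \<sigma> \<tau> u
    by (rule ext) (simp add: up_def csubst_tm_lift split: nat.split)
  show ?thesis
    by (induction A arbitrary: \<sigma> \<tau> u w rule: fm_induct) (auto simp: csubst_tm_comp up csubst_tm_lift)
qed

lemma csubst_tm_id:
  "(\<And>n. n \<in> fv_tm t \<Longrightarrow> \<sigma> n = Var n) \<Longrightarrow> FS c 0 \<notin> syms_tm t \<Longrightarrow> csubst_tm c \<sigma> u t = t"
  by (induction t rule: tm_induct) (auto intro: map_idI)

lemma csubst_id:
  "(\<And>n. n \<in> fv A \<Longrightarrow> \<sigma> n = Var n) \<Longrightarrow> FS c 0 \<notin> syms A \<Longrightarrow> csubst c \<sigma> u A = A"
proof (induction A arbitrary: \<sigma> u rule: fm_induct)
  case (Atom p ts)
  then show ?case by (auto intro!: map_idI csubst_tm_id)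
next
  case (All A)
  then show ?case using All.IH[of "up \<sigma>"] up_id[of A \<sigma>] by simp
next
  case (Ex A)
  then show ?case using Ex.IH[of "up \<sigma>"] up_id[of A \<sigma>] by simp
qed (auto intro: csubst_tm_id)

lemma csubst_inst:
  "csubst c \<sigma> u (inst t A) = inst (csubst_tm c \<sigma> u t) (csubst c (up \<sigma>) (lift_tm u) A)"
proof -
  have scons_lift: "subst_tm (scons t Var) (lift_tm w) = w" for t w
    by (simp add: lift_tm_def subst_tm_comp subst_tm_id)
  have "csubst c \<sigma> u (inst t A) = csubst c (\<lambda>n. csubst_tm c \<sigma> u (scons t Var n)) u A"
    by (simp only: inst_def csubst_self[of c, symmetric] csubst_comp) simp
  also have "\<dots> = csubst c (\<lambda>n. csubst_tm c (scons (csubst_tm c \<sigma> u t) Var) (Fn c []) (up \<sigma> n))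
        (csubst_tm c (scons (csubst_tm c \<sigma> u t) Var) (Fn c []) (lift_tm u)) A"
    by (rule arg_cong2[where f="\<lambda>a b. csubst c a b A"])
       (auto simp: csubst_tm_self scons_lift scons_def up_def split: nat.split)
  also have "\<dots> = inst (csubst_tm c \<sigma> u t) (csubst c (up \<sigma>) (lift_tm u) A)"
    by (simp only: inst_def csubst_self[of c, symmetric] csubst_comp)
  finally show ?thesis .
qed

lemma csubst_lift: "csubst c (up \<sigma>) (lift_tm u) (lift A) = lift (csubst c \<sigma> u A)"
  by (simp only: lift_def csubst_self[of c, symmetric] csubst_comp)
     (simp add: up_def lift_tm_as_csubst[symmetric])

lemma csubst_Imp[simp]: "csubst c \<sigma> u (Imp A B) = Imp (csubst c \<sigma> u A) (csubst c \<sigma> u B)"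
  by (simp add: Imp_def)

lemma peval_csubst: "peval v (csubst c \<sigma> u A) = peval (\<lambda>B. v (csubst c \<sigma> u B)) A"
  by (induction A rule: fm_induct) auto

lemma prov_csubst:
  assumes "\<forall>B\<in>T. fv B = {} \<and> FS c 0 \<notin> syms B"
  shows "prov T A \<Longrightarrow> prov T (csubst c \<sigma> u A)"
proof (induction arbitrary: \<sigma> u rule: prov.induct)
  case (hyp A)
  then have "csubst c \<sigma> u A = A" using assms by (intro csubst_id) auto
  then show ?case using hyp by (simp add: prov.hyp)
next
  case (taut A)
  then show ?case by (auto intro!: prov.taut simp: tautology_def peval_csubst)
next
  case (mp A B)
  then show ?case by (metis csubst_Imp prov.mp)
qed (simp_all add: csubst_inst csubst_lift prov.intros)

lemma consistent_insert_Henkin_axiom: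
  fixes c :: "('f, 'p) sym"
  assumes "\<forall>B\<in>T. fv B = {} \<and> FS c 0 \<notin> syms B" "fv (Ex A) = {}" "FS c 0 \<notin> syms A"
    and "\<not> inconsistent T"
  shows "\<not> inconsistent (insert (Imp (Ex A) (inst (Fn c []) A)) T)"
proof
  assume "inconsistent (insert (Imp (Ex A) (inst (Fn c []) A)) T)"
  then have "prov T (Neg (Imp (Ex A) (inst (Fn c []) A)))"
    using assms(2) by (intro prov_Neg_if_inconsistent_insert) (auto simp: fv_inst)
  then have ex: "prov T (Ex A)" and "prov T (Neg (inst (Fn c []) A))"
    by (auto intro: prov_taut_consequence simp: tautology_def Imp_def)
  then have "prov T (csubst c Var (Var 0) (Neg (inst (Fn c []) A)))"
    using assms(1) by (intro prov_csubst)
  moreover have "csubst c Var (Var 0) (Neg (inst (Fn c []) A)) = Neg A"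
  proof -
    have "csubst c Var (Var 1) A = A" using assms(3) by (intro csubst_id) auto
    moreover have "inst (Var 0) A = A"
      unfolding inst_def
    proof (rule subst_id)
      fix n assume "n \<in> fv A"
      then have "n = 0" using assms(2) by (cases n) auto
      then show "scons (Var 0) Var n = Var n" by simp
    qed
    ultimately show ?thesis by (simp add: csubst_inst up_Var lift_tm_def)
  qed
  ultimately have "prov T (All (Neg A))" by (auto intro: prov.gen)
  moreover have "prov T (Neg (All (Neg A)))" using prov.mp[OF prov.ex_def1 ex] .
  ultimately show False using assms(4) inconsistentI by blast
qed

section \<open>Maximal consistent sets\<close>

definition sentences :: "('f, 'p) lsym set \<Rightarrow> ('f, 'p) fm set" where
  "sentences K = {A. fv A = {} \<and> syms A \<subseteq> K}"

definition ground_terms :: "('f, 'p) lsym set \<Rightarrow> ('f, 'p) tm set" where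
  "ground_terms K = {t. ground_L_term K t}"

lemma ground_terms_Fn: "Fn f ts \<in> ground_terms K \<longleftrightarrow> FS f (length ts) \<in> K \<and> set ts \<subseteq> ground_terms K"
  by (auto simp: ground_terms_def ground_L_term_def)

lemma Eq_sentences: "Eq s t \<in> sentences K \<longleftrightarrow> s \<in> ground_terms K \<and> t \<in> ground_terms K"
  by (auto simp: ground_terms_def ground_L_term_def sentences_def)

lemma Atom_sentences:
  "Atom p ts \<in> sentences K \<longleftrightarrow> PS p (length ts) \<in> K \<and> set ts \<subseteq> ground_terms K"
  by (auto simp: ground_terms_def ground_L_term_def sentences_def)

lemma inst_sentences:
  "All A \<in> sentences K \<or> Ex A \<in> sentences K \<Longrightarrow> t \<in> ground_terms K \<Longrightarrow> inst t A \<in> sentences K"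
  by (auto simp: sentences_def ground_terms_def ground_L_term_def fv_inst syms_inst split: if_splits)

lemma subst_tm_ground: "t \<in> ground_terms K \<Longrightarrow> subst_tm \<sigma> t = t"
  by (auto simp: ground_terms_def ground_L_term_def intro: subst_tm_id)

lemma map_subst_tm_ground: "set ts \<subseteq> ground_terms K \<Longrightarrow> map (subst_tm \<sigma>) ts = ts"
  by (auto intro: map_idI subst_tm_ground)

definition max_consistent :: "('f, 'p) lsym set \<Rightarrow> ('f, 'p) fm set \<Rightarrow> bool" where
  "max_consistent K M \<longleftrightarrow> M \<subseteq> sentences K \<and> \<not> inconsistent M \<and>
     (\<forall>A\<in>sentences K. \<not> inconsistent (insert A M) \<longrightarrow> A \<in> M)"

lemma consistent_Union_chain:
  assumes "subset.chain A C" "C \<noteq> {}" "\<forall>X\<in>A. \<not> inconsistent X"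
  shows "\<not> inconsistent (\<Union>C)"
proof
  assume "inconsistent (\<Union>C)"
  then obtain T0 where T0: "T0 \<subseteq> \<Union>C" "finite T0" "inconsistent T0"
    using inconsistent_finite_subset by metis
  then obtain B where "B \<in> C" "T0 \<subseteq> B" using assms(1,2) finite_subset_Union_chain[of T0 C A] by blast
  moreover have "C \<subseteq> A" using assms(1) by (simp add: pred_on.chain_def)
  ultimately show False using T0(3) inconsistent_mono assms(3) by blast
qed

theorem Lindenbaum:
  assumes "S \<subseteq> sentences K" "\<not> inconsistent S"
  shows "\<exists>M. S \<subseteq> M \<and> max_consistent K M"
proof -
  let ?A = "{X. S \<subseteq> X \<and> X \<subseteq> sentences K \<and> \<not> inconsistent X}"
  have "\<exists>U\<in>?A. \<forall>X\<in>C. X \<subseteq> U" if C: "C \<in> chains ?A" for C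
  proof (cases "C = {}")
    case False
    have "subset.chain ?A C" using C by (simp add: chains_alt_def)
    then have "\<not> inconsistent (\<Union>C)" using False by (rule consistent_Union_chain) blast
    moreover have "S \<subseteq> \<Union>C" "\<Union>C \<subseteq> sentences K" using C False unfolding chains_def by blast+
    ultimately show ?thesis by blast
  qed (use assms in blast)
  then have "\<forall>C\<in>chains ?A. \<exists>U\<in>?A. \<forall>X\<in>C. X \<subseteq> U" by blast
  from Zorn_Lemma2[OF this] obtain M where M: "M \<in> ?A" "\<forall>X\<in>?A. M \<subseteq> X \<longrightarrow> X = M"
    by (elim bexE) (rule that)
  have "max_consistent K M"
    unfolding max_consistent_def
  proof (intro conjI ballI impI)
    fix A assume "A \<in> sentences K" "\<not> inconsistent (insert A M)"
    then have "insert A M \<in> ?A" using M(1) by blast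
    then show "A \<in> M" using M(2) by blast
  qed (use M(1) in blast)+
  then show ?thesis using M(1) by blast
qed

locale max_consistent_set =
  fixes K :: "('f, 'p) lsym set" and M :: "('f, 'p) fm set"
  assumes max_consistent: "max_consistent K M"
begin

lemma sentences: "M \<subseteq> sentences K" and consistent: "\<not> inconsistent M"
  using max_consistent by (auto simp: max_consistent_def)

lemma mem_if_prov: "prov M A \<Longrightarrow> A \<in> sentences K \<Longrightarrow> A \<in> M"
proof (rule ccontr)
  assume A: "prov M A" "A \<in> sentences K" "A \<notin> M"
  then have "prov M (Neg A)" using max_consistent
    by (intro prov_Neg_if_inconsistent_insert) (auto simp: max_consistent_def sentences_def)
  then show False using A consistent inconsistentI by blast
qed

lemma Neg_mem_iff: "A \<in> sentences K \<Longrightarrow> Neg A \<in> M \<longleftrightarrow> A \<notin> M"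
proof
  assume "Neg A \<in> M"
  then show "A \<notin> M" using consistent inconsistentI prov.hyp by blast
next
  assume A: "A \<in> sentences K" "A \<notin> M"
  then have "prov M (Neg A)" using max_consistent
    by (intro prov_Neg_if_inconsistent_insert) (auto simp: max_consistent_def sentences_def)
  then show "Neg A \<in> M" using A by (intro mem_if_prov) (auto simp: sentences_def)
qed

lemma Conj_mem_iff: "Conj A B \<in> sentences K \<Longrightarrow> Conj A B \<in> M \<longleftrightarrow> A \<in> M \<and> B \<in> M"
proof
  assume "Conj A B \<in> sentences K" "Conj A B \<in> M"
  moreover have "prov M A" "prov M B" using \<open>Conj A B \<in> M\<close>
    by (auto intro: prov_taut_consequence prov.hyp simp: tautology_def Imp_def)
  ultimately show "A \<in> M \<and> B \<in> M" by (auto intro!: mem_if_prov simp: sentences_def)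
next
  assume "Conj A B \<in> sentences K" "A \<in> M \<and> B \<in> M"
  moreover have "prov M (Conj A B)" using \<open>A \<in> M \<and> B \<in> M\<close>
    by (auto intro: prov_taut_consequence2 prov.hyp simp: tautology_def Imp_def)
  ultimately show "Conj A B \<in> M" by (auto intro: mem_if_prov)
qed

lemma Disj_mem_iff: "Disj A B \<in> sentences K \<Longrightarrow> Disj A B \<in> M \<longleftrightarrow> A \<in> M \<or> B \<in> M"
proof
  assume AB: "Disj A B \<in> sentences K" "Disj A B \<in> M"
  show "A \<in> M \<or> B \<in> M"
  proof (rule ccontr)
    assume "\<not> (A \<in> M \<or> B \<in> M)"
    then have "Neg A \<in> M" "Neg B \<in> M" using AB(1) Neg_mem_iff by (auto simp: sentences_def)
    then have "prov M (Neg (Disj A B))"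
      by (auto intro: prov_taut_consequence2 prov.hyp simp: tautology_def Imp_def)
    then show False using AB(2) consistent inconsistentI prov.hyp by blast
  qed
next
  assume "Disj A B \<in> sentences K" "A \<in> M \<or> B \<in> M"
  moreover have "prov M (Disj A B)" using \<open>A \<in> M \<or> B \<in> M\<close>
    by (auto intro: prov_taut_consequence prov.hyp simp: tautology_def Imp_def)
  ultimately show "Disj A B \<in> M" by (auto intro: mem_if_prov)
qed

lemma inst_mem_if_All_mem: "All A \<in> M \<Longrightarrow> t \<in> ground_terms K \<Longrightarrow> inst t A \<in> M"
  using sentences
  by (auto intro!: mem_if_prov inst_sentences intro: prov.mp[OF prov.all_inst] prov.hyp)

lemma inst_not_mem_if_Neg_Ex_mem: "Neg (Ex A) \<in> M \<Longrightarrow> t \<in> ground_terms K \<Longrightarrow> inst t A \<notin> M"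
proof -
  assume A: "Neg (Ex A) \<in> M" "t \<in> ground_terms K"
  then have "prov M (All (Neg A))"
    using prov.ex_def2[of M A] by (auto intro: prov_taut_consequence2 prov.hyp simp: tautology_def Imp_def)
  then have "prov M (Neg (inst t A))" using prov.mp[OF prov.all_inst] by (metis inst_Neg)
  moreover have "Neg (Ex A) \<in> sentences K" using A(1) sentences by blast
  then have "Ex A \<in> sentences K" by (simp add: sentences_def)
  then have "inst t A \<in> sentences K" using A(2) by (intro inst_sentences) auto
  moreover from this have "Neg (inst t A) \<in> sentences K" by (simp add: sentences_def)
  ultimately show ?thesis using Neg_mem_iff mem_if_prov by blast
qed

lemma Eq_subst_mem:
  "Eq s t \<in> M \<Longrightarrow> inst s A \<in> M \<Longrightarrow> inst t A \<in> sentences K \<Longrightarrow> inst t A \<in> M"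
  by (rule mem_if_prov) (auto intro: prov.mp[OF prov.mp[OF prov.eq_leib]] prov.hyp)

lemma Eq_refl_mem: "t \<in> ground_terms K \<Longrightarrow> Eq t t \<in> M"
  by (rule mem_if_prov) (auto intro: prov.eq_refl simp: Eq_sentences)

lemma Eq_ground_terms: "Eq s t \<in> M \<Longrightarrow> s \<in> ground_terms K \<and> t \<in> ground_terms K"
  using sentences Eq_sentences by blast

lemma Eq_sym_mem: "Eq s t \<in> M \<Longrightarrow> Eq t s \<in> M"
proof -
  assume st: "Eq s t \<in> M"
  then have "s \<in> ground_terms K" "t \<in> ground_terms K" using Eq_ground_terms by blast+
  moreover from this have "inst t (Eq (Var 0) s) \<in> M"
    by (intro Eq_subst_mem[OF st]) (auto simp: inst_def subst_tm_ground Eq_sentences intro: Eq_refl_mem)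
  ultimately show ?thesis by (simp add: inst_def subst_tm_ground)
qed

lemma Eq_trans_mem: "Eq s t \<in> M \<Longrightarrow> Eq t u \<in> M \<Longrightarrow> Eq s u \<in> M"
proof -
  assume st: "Eq s t \<in> M" and tu: "Eq t u \<in> M"
  then have "s \<in> ground_terms K" "t \<in> ground_terms K" "u \<in> ground_terms K"
    using Eq_ground_terms by blast+
  moreover from this have "inst s (Eq (Var 0) u) \<in> M"
    using tu by (intro Eq_subst_mem[OF Eq_sym_mem[OF st]]) (auto simp: inst_def subst_tm_ground Eq_sentences)
  ultimately show ?thesis by (simp add: inst_def subst_tm_ground)
qed

lemma Fn_cong_mem1:
  assumes "Eq a b \<in> M" "Fn f (ps @ a # qs) \<in> ground_terms K"
  shows "Eq (Fn f (ps @ a # qs)) (Fn f (ps @ b # qs)) \<in> M"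
proof -
  have g: "a \<in> ground_terms K" "b \<in> ground_terms K" "set ps \<subseteq> ground_terms K" "set qs \<subseteq> ground_terms K"
    using assms Eq_ground_terms by (auto simp: ground_terms_Fn)
  have "inst b (Eq (Fn f (ps @ a # qs)) (Fn f (ps @ Var 0 # qs))) \<in> M"
    by (rule Eq_subst_mem[OF assms(1)])
       (use assms g in \<open>auto simp: inst_def subst_tm_ground map_subst_tm_ground Eq_sentences ground_terms_Fn
         intro: Eq_refl_mem\<close>)
  then show ?thesis using assms g by (simp add: inst_def subst_tm_ground map_subst_tm_ground)
qed

lemma Fn_cong_mem:
  "list_all2 (\<lambda>a b. Eq a b \<in> M) ts us \<Longrightarrow> Fn f (ps @ ts) \<in> ground_terms K \<Longrightarrow>
   Eq (Fn f (ps @ ts)) (Fn f (ps @ us)) \<in> M"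
proof (induction ts us arbitrary: ps rule: list_all2_induct)
  case Nil
  then show ?case by (simp add: Eq_refl_mem)
next
  case (Cons a ts b us)
  have "Eq (Fn f (ps @ a # ts)) (Fn f (ps @ b # ts)) \<in> M" using Cons(1,4) by (rule Fn_cong_mem1)
  moreover have "Fn f ((ps @ [b]) @ ts) \<in> ground_terms K"
    using Cons(1,4) Eq_ground_terms by (auto simp: ground_terms_Fn)
  then have "Eq (Fn f ((ps @ [b]) @ ts)) (Fn f ((ps @ [b]) @ us)) \<in> M" by (rule Cons.IH)
  ultimately show ?case using Eq_trans_mem by simp
qed

lemma Atom_cong_mem1:
  assumes "Eq a b \<in> M" "Atom p (ps @ a # qs) \<in> M"
  shows "Atom p (ps @ b # qs) \<in> M"
proof -
  have "Atom p (ps @ a # qs) \<in> sentences K" using assms(2) sentences by blast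
  then have "a \<in> ground_terms K" "b \<in> ground_terms K" "set ps \<subseteq> ground_terms K"
    "set qs \<subseteq> ground_terms K" "PS p (length (ps @ a # qs)) \<in> K"
    using assms(1) Eq_ground_terms by (auto simp: Atom_sentences)
  then show ?thesis
    using Eq_subst_mem[OF assms(1), of "Atom p (ps @ Var 0 # qs)"] assms(2)
    by (simp add: inst_def map_subst_tm_ground Atom_sentences)
qed

lemma Atom_cong_mem:
  "list_all2 (\<lambda>a b. Eq a b \<in> M) ts us \<Longrightarrow> Atom p (ps @ ts) \<in> M \<Longrightarrow> Atom p (ps @ us) \<in> M"
proof (induction ts us arbitrary: ps rule: list_all2_induct)
  case (Cons a ts b us)
  then have "Atom p ((ps @ [b]) @ ts) \<in> M" using Atom_cong_mem1 by simp
  then have "Atom p ((ps @ [b]) @ us) \<in> M" by (rule Cons.IH)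
  then show ?case by simp
qed simp

end

section \<open>Term models\<close>

locale term_model = max_consistent_set +
  fixes c0 :: "('f, 'p) tm"
  assumes c0: "c0 \<in> ground_terms K"
begin

definition eq_class :: "('f, 'p) tm \<Rightarrow> ('f, 'p) tm set" where
  "eq_class t = {u \<in> ground_terms K. Eq t u \<in> M}"

definition tdom :: "('f, 'p) tm set set" where
  "tdom = eq_class ` ground_terms K"

definition rep :: "('f, 'p) tm set \<Rightarrow> ('f, 'p) tm" where
  "rep X = (SOME t. t \<in> X)"

definition tfun :: "('f, 'p) sym \<Rightarrow> ('f, 'p) tm set list \<Rightarrow> ('f, 'p) tm set" where
  "tfun f Xs = (if FS f (length Xs) \<in> K \<and> set Xs \<subseteq> tdom then eq_class (Fn f (map rep Xs)) else eq_class c0)"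

definition tpred :: "'p \<Rightarrow> ('f, 'p) tm set list \<Rightarrow> bool" where
  "tpred p Xs = (Atom p (map rep Xs) \<in> M)"

definition henkin :: bool where
  "henkin \<longleftrightarrow> (\<forall>A. Ex A \<in> M \<longrightarrow> (\<exists>t\<in>ground_terms K. inst t A \<in> M))"

lemma mem_eq_class_self: "t \<in> ground_terms K \<Longrightarrow> t \<in> eq_class t"
  by (simp add: eq_class_def Eq_refl_mem)

lemma rep_eq_class: "t \<in> ground_terms K \<Longrightarrow> rep (eq_class t) \<in> ground_terms K \<and> Eq t (rep (eq_class t)) \<in> M"
  using someI[of "\<lambda>u. u \<in> eq_class t", OF mem_eq_class_self] by (simp add: rep_def eq_class_def)

lemma eq_class_eq_iff:
  "s \<in> ground_terms K \<Longrightarrow> t \<in> ground_terms K \<Longrightarrow> eq_class s = eq_class t \<longleftrightarrow> Eq s t \<in> M"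
proof
  assume "t \<in> ground_terms K" "eq_class s = eq_class t"
  then have "t \<in> eq_class s" using mem_eq_class_self by simp
  then show "Eq s t \<in> M" by (simp add: eq_class_def)
next
  assume "Eq s t \<in> M"
  then show "eq_class s = eq_class t" unfolding eq_class_def using Eq_sym_mem Eq_trans_mem by blast
qed

lemma is_structure_term_model: "is_structure tdom tfun"
proof -
  have "tfun f Xs \<in> tdom" if "set Xs \<subseteq> tdom" for f Xs
  proof (cases "FS f (length Xs) \<in> K")
    case True
    have "set (map rep Xs) \<subseteq> ground_terms K" using that rep_eq_class by (auto simp: tdom_def)
    then show ?thesis using True that by (simp add: tfun_def tdom_def ground_terms_Fn)
  qed (use c0 in \<open>simp add: tfun_def tdom_def\<close>)
  then show ?thesis using c0 by (auto simp: is_structure_def tdom_def)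
qed

lemma Eq_rep_eq_class:
  "set ts \<subseteq> ground_terms K \<Longrightarrow> list_all2 (\<lambda>a b. Eq a b \<in> M) ts (map (rep \<circ> eq_class) ts)"
  "set ts \<subseteq> ground_terms K \<Longrightarrow> list_all2 (\<lambda>a b. Eq a b \<in> M) (map (rep \<circ> eq_class) ts) ts"
  by (auto simp: list_all2_map1 list_all2_map2 list_all2_same dest: rep_eq_class intro: Eq_sym_mem)

lemma tval_term_model: "t \<in> ground_terms K \<Longrightarrow> tval tfun e t = eq_class t"
proof (induction t rule: tm_induct)
  case (Var n)
  then show ?case by (simp add: ground_terms_def ground_L_term_def)
next
  case (Fn f ts)
  have ts: "set ts \<subseteq> ground_terms K" "FS f (length ts) \<in> K" using Fn.prems by (auto simp: ground_terms_Fn)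
  have "map (tval tfun e) ts = map eq_class ts" using Fn.IH ts by auto
  then have "tval tfun e (Fn f ts) = tfun f (map eq_class ts)" by (simp del: map_eq_conv)
  also have "\<dots> = eq_class (Fn f (map (rep \<circ> eq_class) ts))"
    using ts by (auto simp: tfun_def tdom_def)
  also have "\<dots> = eq_class (Fn f ts)"
    using ts rep_eq_class Fn_cong_mem[OF Eq_rep_eq_class(2)[OF ts(1)], of f "[]"] Fn.prems
    by (subst eq_class_eq_iff) (auto simp: ground_terms_Fn)
  finally show ?case .
qed

lemma sat_term_model_All:
  "sat tdom tfun tpred e (All A) \<longleftrightarrow> (\<forall>t\<in>ground_terms K. sat tdom tfun tpred e (inst t A))"
  and sat_term_model_Ex:
  "sat tdom tfun tpred e (Ex A) \<longleftrightarrow> (\<exists>t\<in>ground_terms K. sat tdom tfun tpred e (inst t A))"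
  by (auto simp: tdom_def sat_inst tval_term_model)

lemma henkin_All:
  assumes "henkin" "All A \<in> sentences K" "All A \<notin> M"
  shows "\<exists>t\<in>ground_terms K. inst t A \<notin> M"
proof -
  have "prov M (Neg (All A))" using assms(2,3) Neg_mem_iff prov.hyp by blast
  moreover have "prov M (Imp (All (Neg (Neg A))) (All A))"
    by (rule prov.mp[OF prov.all_dist], rule prov.gen, rule prov.taut) (simp add: tautology_def Imp_def)
  ultimately have "prov M (Neg (All (Neg (Neg A))))"
    by (rule prov_taut_consequence2) (auto simp: tautology_def Imp_def)
  then have "prov M (Ex (Neg A))"
    using prov.ex_def2[of M "Neg A"] by (rule prov_taut_consequence2) (auto simp: tautology_def Imp_def)
  moreover have "Ex (Neg A) \<in> sentences K" using assms(2) by (simp add: sentences_def)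
  ultimately have "Ex (Neg A) \<in> M" by (rule mem_if_prov)
  then obtain t where t: "t \<in> ground_terms K" "Neg (inst t A) \<in> M"
    using assms(1) by (auto simp: henkin_def inst_Neg)
  moreover have "inst t A \<in> sentences K" using assms(2) t(1) by (intro inst_sentences) auto
  ultimately show ?thesis using Neg_mem_iff by blast
qed

end

text \<open>\<open>universal True A\<close>: every quantifier of \<open>A\<close> is a \<open>\<forall>\<close> in positive or an \<open>\<exists>\<close> in
  negative position; \<open>universal False A\<close> is the dual, existential, condition.\<close>

fun universal :: "bool \<Rightarrow> ('f, 'p) fm \<Rightarrow> bool" where
  "universal pos (Atom p ts) = True"
| "universal pos (Eq s t) = True"
| "universal pos (Neg A) = universal (\<not> pos) A"
| "universal pos (Conj A B) = (universal pos A \<and> universal pos B)"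
| "universal pos (Disj A B) = (universal pos A \<and> universal pos B)"
| "universal pos (All A) = (pos \<and> universal pos A)"
| "universal pos (Ex A) = (\<not> pos \<and> universal pos A)"

lemma universal_subst[simp]: "universal pos (subst \<sigma> A) = universal pos A"
  by (induction A arbitrary: pos \<sigma> rule: fm_induct) auto

lemma universal_inst[simp]: "universal pos (inst t A) = universal pos A"
  by (simp add: inst_def)

context term_model
begin

definition faithful :: "('f, 'p) fm \<Rightarrow> bool" where
  "faithful B \<longleftrightarrow> (\<forall>e.
     ((henkin \<or> universal True B) \<longrightarrow> B \<in> M \<longrightarrow> sat tdom tfun tpred e B) \<and>
     ((henkin \<or> universal False B) \<longrightarrow> B \<notin> M \<longrightarrow> \<not> sat tdom tfun tpred e B))"

lemma faithful_Atom:
  assumes "Atom p ts \<in> sentences K"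
  shows "faithful (Atom p ts)"
proof -
  have ts: "set ts \<subseteq> ground_terms K" using assms by (simp add: Atom_sentences)
  then have "map (tval tfun e) ts = map eq_class ts" for e by (simp add: tval_term_model subset_iff)
  then have "sat tdom tfun tpred e (Atom p ts) \<longleftrightarrow> Atom p (map (rep \<circ> eq_class) ts) \<in> M" for e
    by (simp add: tpred_def del: map_eq_conv)
  also have "\<dots> \<longleftrightarrow> Atom p ts \<in> M"
    using Atom_cong_mem[OF Eq_rep_eq_class(1)[OF ts], of p "[]"]
      Atom_cong_mem[OF Eq_rep_eq_class(2)[OF ts], of p "[]"] by auto
  finally show ?thesis by (simp add: faithful_def)
qed

lemma faithful_Eq: "Eq s t \<in> sentences K \<Longrightarrow> faithful (Eq s t)"
  by (simp add: faithful_def Eq_sentences tval_term_model eq_class_eq_iff)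

lemma faithful_Neg: "A \<in> sentences K \<Longrightarrow> faithful A \<Longrightarrow> faithful (Neg A)"
  using Neg_mem_iff by (auto simp: faithful_def)

lemma faithful_Conj: "Conj A B \<in> sentences K \<Longrightarrow> faithful A \<Longrightarrow> faithful B \<Longrightarrow> faithful (Conj A B)"
  using Conj_mem_iff by (auto simp: faithful_def)

lemma faithful_Disj: "Disj A B \<in> sentences K \<Longrightarrow> faithful A \<Longrightarrow> faithful B \<Longrightarrow> faithful (Disj A B)"
  using Disj_mem_iff by (auto simp: faithful_def)

lemma faithful_All:
  assumes "All A \<in> sentences K" "\<And>t. t \<in> ground_terms K \<Longrightarrow> faithful (inst t A)"
  shows "faithful (All A)"
  unfolding faithful_def sat_term_model_All
proof (intro allI conjI impI)
  fix e
  show "\<forall>t\<in>ground_terms K. sat tdom tfun tpred e (inst t A)"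
    if "henkin \<or> universal True (All A)" "All A \<in> M"
    using that assms(2) inst_mem_if_All_mem by (auto simp: faithful_def)
  show "\<not> (\<forall>t\<in>ground_terms K. sat tdom tfun tpred e (inst t A))"
    if "henkin \<or> universal False (All A)" "All A \<notin> M"
    using that assms henkin_All by (fastforce simp: faithful_def)
qed

lemma faithful_Ex:
  assumes "Ex A \<in> sentences K" "\<And>t. t \<in> ground_terms K \<Longrightarrow> faithful (inst t A)"
  shows "faithful (Ex A)"
  unfolding faithful_def sat_term_model_Ex
proof (intro allI conjI impI)
  fix e
  show "\<exists>t\<in>ground_terms K. sat tdom tfun tpred e (inst t A)"
    if "henkin \<or> universal True (Ex A)" "Ex A \<in> M"
    using that assms(2) by (fastforce simp: faithful_def henkin_def)
  show "\<not> (\<exists>t\<in>ground_terms K. sat tdom tfun tpred e (inst t A))"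
    if "henkin \<or> universal False (Ex A)" "Ex A \<notin> M"
    using that assms inst_not_mem_if_Neg_Ex_mem Neg_mem_iff by (auto simp: faithful_def)
qed

theorem truth_lemma: "B \<in> sentences K \<Longrightarrow> faithful B"
proof (induction "fsize B" arbitrary: B rule: less_induct)
  case less
  have sub: "A \<in> sentences K" if "A' \<in> sentences K" "syms A \<subseteq> syms A'" "fv A \<subseteq> fv A'" for A A'
    using that by (auto simp: sentences_def)
  show ?case
  proof (cases B)
    case (Neg A)
    show ?thesis unfolding Neg using Neg less sub[of B A] by (intro faithful_Neg) auto
  next
    case (Conj A1 A2)
    show ?thesis unfolding Conj using Conj less sub[of B A1] sub[of B A2] by (intro faithful_Conj) auto
  next
    case (Disj A1 A2)
    show ?thesis unfolding Disj using Disj less sub[of B A1] sub[of B A2] by (intro faithful_Disj) auto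
  next
    case (All A)
    have "faithful (inst t A)" if "t \<in> ground_terms K" for t
      using less.hyps[of "inst t A"] less.prems that All inst_sentences[of A K t] by simp
    then show ?thesis using less.prems All by (simp add: faithful_All)
  next
    case (Ex A)
    have "faithful (inst t A)" if "t \<in> ground_terms K" for t
      using less.hyps[of "inst t A"] less.prems that Ex inst_sentences[of A K t] by simp
    then show ?thesis using less.prems Ex by (simp add: faithful_Ex)
  qed (use less faithful_Atom faithful_Eq in auto)
qed

corollary models_if_mem: "B \<in> M \<Longrightarrow> henkin \<or> universal True B \<Longrightarrow> models tdom tfun tpred B"
  using truth_lemma sentences by (auto simp: models_def faithful_def)

end

section \<open>Skolemization\<close>

lemma fv_sk_term[simp]: "fv_tm (sk_term Q A) = {n. Suc n \<in> fv A}"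
  using finite_fv[of "All A"] by (auto simp: sk_term_def)

lemma syms_sk_term[simp]: "syms_tm (sk_term Q A) = {FS (Sk Q A) (card {n. Suc n \<in> fv A})}"
  by (auto simp: sk_term_def)

lemma fv_sk: "fv (sk Q A) \<subseteq> fv A"
proof (induction Q A rule: sk.induct)
  case (6 Q A)
  have "fv (inst (sk_term QAll A) A) \<subseteq> fv (All A)" by (auto simp: fv_inst)
  then show ?case using 6 by (cases Q) auto
next
  case (7 Q A)
  have "fv (inst (sk_term QEx A) A) \<subseteq> fv (Ex A)" by (auto simp: fv_inst)
  then show ?case using 7 by (cases Q) auto
qed auto

lemma Sk_in_sk_syms: "syms A \<subseteq> L \<union> sk_syms L \<Longrightarrow> FS (Sk Q A) (card {n. Suc n \<in> fv A}) \<in> sk_syms L"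
  using sk_syms.intros[of Q A L] by auto

lemma syms_sk: "syms A \<subseteq> L \<union> sk_syms L \<Longrightarrow> syms (sk Q A) \<subseteq> L \<union> sk_syms L"
proof (induction Q A rule: sk.induct)
  case (6 Q A)
  then show ?case using Sk_in_sk_syms[of A L QAll] by (cases Q) (auto simp: syms_inst)
next
  case (7 Q A)
  then show ?case using Sk_in_sk_syms[of A L QEx] by (cases Q) (auto simp: syms_inst)
qed auto

lemma universal_sk: "universal (Q = QEx) (sk Q A)"
  by (induction Q A rule: sk.induct) (case_tac Q; simp)+

lemma sat_sk:
  assumes "is_structure D F"
  shows "range e \<subseteq> D \<Longrightarrow> (Q = QEx \<longrightarrow> sat D F P e (sk Q A) \<longrightarrow> sat D F P e A) \<and>
                       (Q = QAll \<longrightarrow> sat D F P e A \<longrightarrow> sat D F P e (sk Q A))"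
proof (induction Q A arbitrary: e rule: sk.induct)
  case (5 Q A)
  then show ?case by (cases Q) auto
next
  case (6 Q A)
  show ?case
  proof (cases Q)
    case QAll
    then show ?thesis using 6(1)[OF QAll 6(3)] tval_in_dom[OF assms 6(3)] by (simp add: sat_inst)
  next
    case QEx
    have "sat D F P (case_nat d e) (sk QEx A) \<Longrightarrow> sat D F P (case_nat d e) A" if "d \<in> D" for d
      using 6(2)[of "case_nat d e"] QEx range_case_nat[OF 6(3) that] by auto
    then show ?thesis using QEx by auto
  qed
next
  case (7 Q A)
  show ?case
  proof (cases Q)
    case QEx
    then show ?thesis using 7(1)[OF QEx 7(3)] tval_in_dom[OF assms 7(3)] by (auto simp: sat_inst)
  next
    case QAll
    have "sat D F P (case_nat d e) A \<Longrightarrow> sat D F P (case_nat d e) (sk QAll A)" if "d \<in> D" for d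
      using 7(2)[of "case_nat d e"] QAll range_case_nat[OF 7(3) that] by auto
    then show ?thesis using QAll by auto
  qed
qed auto

definition is_skolem_fun :: "'u set \<Rightarrow> (('f, 'p) sym \<Rightarrow> 'u list \<Rightarrow> 'u) \<Rightarrow> ('p \<Rightarrow> 'u list \<Rightarrow> bool)
    \<Rightarrow> quant \<Rightarrow> ('f, 'p) fm \<Rightarrow> bool" where
  "is_skolem_fun D F P Q B \<longleftrightarrow> (\<forall>e. range e \<subseteq> D \<longrightarrow>
      sat D F P e (qf Q B) = sat D F P (case_nat (tval F e (sk_term Q B)) e) B)"

lemma sat_sk_if_skolem_funs:
  assumes "is_structure D F"
    and "\<And>Q B. FS (Sk Q B) (card {n. Suc n \<in> fv B}) \<in> sk_syms L \<Longrightarrow> is_skolem_fun D F P Q B"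
  shows "syms A \<subseteq> L \<union> sk_syms L \<Longrightarrow> range e \<subseteq> D \<Longrightarrow>
     (Q = QEx \<longrightarrow> sat D F P e A \<longrightarrow> sat D F P e (sk Q A)) \<and>
     (Q = QAll \<longrightarrow> sat D F P e (sk Q A) \<longrightarrow> sat D F P e A)"
proof (induction Q A arbitrary: e rule: sk.induct)
  case (5 Q A)
  then show ?case by (cases Q) auto
next
  case (6 Q A)
  show ?case
  proof (cases Q)
    case QAll
    have "is_skolem_fun D F P QAll A" using 6(3) by (intro assms(2) Sk_in_sk_syms) simp
    moreover have "syms (inst (sk_term QAll A) A) \<subseteq> L \<union> sk_syms L"
      using 6(3) Sk_in_sk_syms[of A L QAll] by (auto simp: syms_inst)
    ultimately show ?thesis using 6(1)[OF QAll _ 6(4)] 6(4) QAll by (simp add: is_skolem_fun_def sat_inst)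
  next
    case QEx
    have "sat D F P (case_nat d e) A \<Longrightarrow> sat D F P (case_nat d e) (sk QEx A)" if "d \<in> D" for d
      using 6(2)[of "case_nat d e"] 6(3) QEx range_case_nat[OF 6(4) that] by simp
    then show ?thesis using QEx by auto
  qed
next
  case (7 Q A)
  show ?case
  proof (cases Q)
    case QEx
    have "is_skolem_fun D F P QEx A" using 7(3) by (intro assms(2) Sk_in_sk_syms) simp
    moreover have "syms (inst (sk_term QEx A) A) \<subseteq> L \<union> sk_syms L"
      using 7(3) Sk_in_sk_syms[of A L QEx] by (auto simp: syms_inst)
    ultimately show ?thesis using 7(1)[OF QEx _ 7(4)] 7(4) QEx by (simp add: is_skolem_fun_def sat_inst)
  next
    case QAll
    have "sat D F P (case_nat d e) (sk QAll A) \<Longrightarrow> sat D F P (case_nat d e) A" if "d \<in> D" for d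
      using 7(2)[of "case_nat d e"] 7(3) QAll range_case_nat[OF 7(4) that] by simp
    then show ?thesis using QAll by auto
  qed
qed auto

definition args_env :: "'u set \<Rightarrow> nat list \<Rightarrow> 'u list \<Rightarrow> nat \<Rightarrow> 'u" where
  "args_env D vs xs v = (case map_of (zip vs xs) v of Some d \<Rightarrow> d | None \<Rightarrow> (SOME d. d \<in> D))"

lemma args_env_map: "distinct vs \<Longrightarrow> v \<in> set vs \<Longrightarrow> args_env D vs (map e vs) v = e v"
  by (simp add: args_env_def map_of_zip_map)

text \<open>Symbols \<open>Sk Q B\<close> outside \<open>L\<close> (at their proper arity) are reinterpreted as Skolem
  functions: they pick a witness of \<open>Ex B\<close>, resp. a counterexample to \<open>All B\<close>, if there is one.
  The choice refers to the truth of \<open>B\<close> in the expanded structure itself, a legitimate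
  recursion because \<open>B\<close> is a subterm of \<open>Sk Q B\<close>.\<close>

primrec exp_tval :: "'u set \<Rightarrow> (('f, 'p) sym \<Rightarrow> 'u list \<Rightarrow> 'u) \<Rightarrow> ('p \<Rightarrow> 'u list \<Rightarrow> bool)
    \<Rightarrow> ('f, 'p) lsym set \<Rightarrow> ('f, 'p) tm \<Rightarrow> (nat \<Rightarrow> 'u) \<Rightarrow> 'u"
and exp_fun :: "'u set \<Rightarrow> (('f, 'p) sym \<Rightarrow> 'u list \<Rightarrow> 'u) \<Rightarrow> ('p \<Rightarrow> 'u list \<Rightarrow> bool)
    \<Rightarrow> ('f, 'p) lsym set \<Rightarrow> ('f, 'p) sym \<Rightarrow> 'u list \<Rightarrow> 'u"
and exp_sat :: "'u set \<Rightarrow> (('f, 'p) sym \<Rightarrow> 'u list \<Rightarrow> 'u) \<Rightarrow> ('p \<Rightarrow> 'u list \<Rightarrow> bool)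
    \<Rightarrow> ('f, 'p) lsym set \<Rightarrow> ('f, 'p) fm \<Rightarrow> (nat \<Rightarrow> 'u) \<Rightarrow> bool" where
  "exp_tval D F P L (Var n) e = e n"
| "exp_tval D F P L (Fn f ts) e = exp_fun D F P L f (map (\<lambda>t. exp_tval D F P L t e) ts)"
| "exp_fun D F P L (Sym f) xs = F (Sym f) xs"
| "exp_fun D F P L (Sk Q B) xs =
    (if FS (Sk Q B) (length xs) \<notin> L \<and> length xs = card (fv (qf Q B))
     then (SOME d. d \<in> D \<and>
        ((\<exists>d'\<in>D. exp_sat D F P L B (case_nat d' (args_env D (sorted_list_of_set (fv (qf Q B))) xs)) = (Q = QEx))
          \<longrightarrow> exp_sat D F P L B (case_nat d (args_env D (sorted_list_of_set (fv (qf Q B))) xs)) = (Q = QEx)))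
     else F (Sk Q B) xs)"
| "exp_sat D F P L (Atom p ts) e = P p (map (\<lambda>t. exp_tval D F P L t e) ts)"
| "exp_sat D F P L (Eq s t) e = (exp_tval D F P L s e = exp_tval D F P L t e)"
| "exp_sat D F P L (Neg A) e = (\<not> exp_sat D F P L A e)"
| "exp_sat D F P L (Conj A B) e = (exp_sat D F P L A e \<and> exp_sat D F P L B e)"
| "exp_sat D F P L (Disj A B) e = (exp_sat D F P L A e \<or> exp_sat D F P L B e)"
| "exp_sat D F P L (All A) e = (\<forall>d\<in>D. exp_sat D F P L A (case_nat d e))"
| "exp_sat D F P L (Ex A) e = (\<exists>d\<in>D. exp_sat D F P L A (case_nat d e))"

lemma exp_tval_eq: "exp_tval D F P L t e = tval (exp_fun D F P L) e t"
  by (induction t rule: tm_induct) (simp_all cong: map_cong)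

lemma exp_sat_eq: "exp_sat D F P L A e = sat D (exp_fun D F P L) P e A"
  by (induction A arbitrary: e rule: fm_induct) (simp_all add: exp_tval_eq cong: map_cong)

lemma exp_fun_L: "FS f (length xs) \<in> L \<Longrightarrow> exp_fun D F P L f xs = F f xs"
  by (cases f) auto

lemma models_exp: "syms A \<subseteq> L \<Longrightarrow> models D (exp_fun D F P L) P A \<longleftrightarrow> models D F P A"
  unfolding models_def by (intro all_cong1 imp_cong refl sat_cong) (auto simp: exp_fun_L)

lemma is_structure_exp:
  assumes "is_structure D F"
  shows "is_structure D (exp_fun D F P L)"
proof -
  have "exp_fun D F P L f xs \<in> D" if "set xs \<subseteq> D" for f xs
  proof (cases f)
    case (Sk Q B)
    let ?c = "\<lambda>d. d \<in> D \<and>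
        ((\<exists>d'\<in>D. exp_sat D F P L B (case_nat d' (args_env D (sorted_list_of_set (fv (qf Q B))) xs)) = (Q = QEx))
          \<longrightarrow> exp_sat D F P L B (case_nat d (args_env D (sorted_list_of_set (fv (qf Q B))) xs)) = (Q = QEx))"
    have "\<exists>d. ?c d" using assms by (simp add: is_structure_def) blast
    then have "?c (SOME d. ?c d)" by (rule someI_ex)
    then show ?thesis using Sk assms that by (auto simp: is_structure_def)
  qed (use assms that in \<open>simp add: is_structure_def\<close>)
  then show ?thesis using assms by (simp add: is_structure_def)
qed

lemma is_skolem_fun_exp:
  fixes D :: "'u set"
  assumes "is_structure D F" "FS (Sk Q B) (card {n. Suc n \<in> fv B}) \<notin> L"
  shows "is_skolem_fun D (exp_fun D F P L) P Q B"
  unfolding is_skolem_fun_def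
proof (intro allI impI)
  fix e :: "nat \<Rightarrow> 'u" assume e: "range e \<subseteq> D"
  let ?F = "exp_fun D F P L"
  let ?vs = "sorted_list_of_set (fv (qf Q B))"
  let ?E = "args_env D ?vs (map e ?vs)"
  have E: "exp_sat D F P L B (case_nat d ?E) = sat D ?F P (case_nat d e) B" for d
    unfolding exp_sat_eq by (rule sat_cong_env) (auto simp: args_env_map split: nat.split)
  let ?c = "\<lambda>d. d \<in> D \<and> ((\<exists>d'\<in>D. sat D ?F P (case_nat d' e) B = (Q = QEx))
                   \<longrightarrow> sat D ?F P (case_nat d e) B = (Q = QEx))"
  have "tval ?F e (sk_term Q B) = (SOME d. ?c d)"
    using assms(2) by (simp add: sk_term_def comp_def E[simplified])
  moreover have "\<exists>d. ?c d" using assms(1) by (simp add: is_structure_def) blast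
  then have "?c (SOME d. ?c d)" by (rule someI_ex)
  ultimately have "?c (tval ?F e (sk_term Q B))" by simp
  then show "sat D ?F P e (qf Q B) = sat D ?F P (case_nat (tval ?F e (sk_term Q B)) e) B"
    by (cases Q) auto
qed

section \<open>Induction axioms\<close>

definition induction_holds :: "'u set \<Rightarrow> (('f, 'p) sym \<Rightarrow> 'u list \<Rightarrow> 'u) \<Rightarrow> 'f \<Rightarrow> 'f \<Rightarrow> ('u \<Rightarrow> bool) \<Rightarrow> bool"
where
  "induction_holds D F z s \<Phi> \<longleftrightarrow>
     \<Phi> (F (Sym z) []) \<and> (\<forall>d\<in>D. \<Phi> d \<longrightarrow> \<Phi> (F (Sym s) [d])) \<longrightarrow> (\<forall>d\<in>D. \<Phi> d)"

definition ind_matrix :: "'f \<Rightarrow> 'f \<Rightarrow> ('f, 'p) fm \<Rightarrow> ('f, 'p) fm" where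
  "ind_matrix z s \<psi> = Imp (Conj (inst (zero_tm z) \<psi>)
     (All (Imp \<psi> (subst (scons (suc_tm s (Var 0)) (\<lambda>n. Var (Suc n))) \<psi>)))) (All \<psi>)"

definition rank :: "nat set \<Rightarrow> nat \<Rightarrow> nat" where
  "rank S v = card {u\<in>S. u < v}"

definition ind_renaming :: "nat \<Rightarrow> nat set \<Rightarrow> nat \<Rightarrow> ('f, 'p) tm" where
  "ind_renaming x S v = (if v = x then Var 0 else if v \<in> S then Var (Suc (rank S v)) else Var v)"

lemma rank_less_card: "finite S \<Longrightarrow> v \<in> S \<Longrightarrow> rank S v < card S"
  unfolding rank_def by (rule psubset_card_mono) auto

lemma inj_on_rank: "finite S \<Longrightarrow> inj_on (rank S) S"
proof (rule inj_onI)
  have less: "rank S u < rank S v" if "finite S" "u \<in> S" "u < v" for u v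
    unfolding rank_def using that by (intro psubset_card_mono) auto
  show "u = v" if "finite S" "u \<in> S" "v \<in> S" "rank S u = rank S v" for u v
    using that less[of u v] less[of v u] by (metis less_irrefl linorder_neqE_nat)
qed

lemma ind_ax_eq:
  "ind_ax z s x \<phi> = alls (card (fv \<phi> - {x})) (ind_matrix z s (subst (ind_renaming x (fv \<phi> - {x})) \<phi>))"
proof -
  have set: "set (sorted_list_of_set (fv \<phi> - {x})) = fv \<phi> - {x}"
    and length: "length (sorted_list_of_set (fv \<phi> - {x})) = card (fv \<phi> - {x})"
    by simp_all
  show ?thesis
    unfolding ind_ax_def Let_def ind_matrix_def ind_renaming_def rank_def set length ..
qed

lemma sat_alls:
  "sat D F P e (alls k B) \<longleftrightarrow> (\<forall>f. (\<forall>i<k. f i \<in> D) \<longrightarrow> sat D F P (\<lambda>n. if n < k then f n else e (n - k)) B)"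
proof (induction k arbitrary: e)
  case 0 then show ?case by simp
next
  case (Suc k)
  have "sat D F P e (alls (Suc k) B) \<longleftrightarrow>
     (\<forall>d\<in>D. \<forall>f. (\<forall>i<k. f i \<in> D) \<longrightarrow> sat D F P (\<lambda>n. if n < k then f n else case_nat d e (n - k)) B)"
    using Suc by simp
  also have "\<dots> \<longleftrightarrow> (\<forall>f. (\<forall>i<Suc k. f i \<in> D) \<longrightarrow> sat D F P (\<lambda>n. if n < Suc k then f n else e (n - Suc k)) B)"
  proof
    assume a: "\<forall>d\<in>D. \<forall>f. (\<forall>i<k. f i \<in> D) \<longrightarrow> sat D F P (\<lambda>n. if n < k then f n else case_nat d e (n - k)) B"
    show "\<forall>f. (\<forall>i<Suc k. f i \<in> D) \<longrightarrow> sat D F P (\<lambda>n. if n < Suc k then f n else e (n - Suc k)) B"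
    proof (intro allI impI)
      fix f assume f: "\<forall>i<Suc k. f i \<in> D"
      have "(\<lambda>n. if n < k then f n else case_nat (f k) e (n - k)) = (\<lambda>n. if n < Suc k then f n else e (n - Suc k))"
        by (rule ext) (auto split: nat.split simp: not_less less_Suc_eq Suc_diff_le diff_Suc)
      then show "sat D F P (\<lambda>n. if n < Suc k then f n else e (n - Suc k)) B"
        using a f by (metis lessI less_SucI)
    qed
  next
    assume a: "\<forall>f. (\<forall>i<Suc k. f i \<in> D) \<longrightarrow> sat D F P (\<lambda>n. if n < Suc k then f n else e (n - Suc k)) B"
    show "\<forall>d\<in>D. \<forall>f. (\<forall>i<k. f i \<in> D) \<longrightarrow> sat D F P (\<lambda>n. if n < k then f n else case_nat d e (n - k)) B"
    proof (intro ballI allI impI)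
      fix d f assume d: "d \<in> D" and f: "\<forall>i<k. f i \<in> D"
      let ?f = "f(k := d)"
      have "(\<lambda>n. if n < k then f n else case_nat d e (n - k)) = (\<lambda>n. if n < Suc k then ?f n else e (n - Suc k))"
        by (rule ext) (auto split: nat.split simp: not_less less_Suc_eq Suc_diff_le diff_Suc)
      moreover have "\<forall>i<Suc k. ?f i \<in> D" using d f by (auto simp: less_Suc_eq)
      ultimately show "sat D F P (\<lambda>n. if n < k then f n else case_nat d e (n - k)) B"
        using a by metis
    qed
  qed
  finally show ?case .
qed

lemma sat_ind_matrix:
  "sat D F P e (ind_matrix z s \<psi>) \<longleftrightarrow> induction_holds D F z s (\<lambda>d. sat D F P (case_nat d e) \<psi>)"
proof -
  have "(\<lambda>n. tval F (case_nat d e) (scons (suc_tm s (Var 0)) (\<lambda>n. Var (Suc n)) n))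
      = case_nat (F (Sym s) [d]) e" for d
    by (rule ext) (simp add: suc_tm_def split: nat.split)
  then show ?thesis
    by (simp add: ind_matrix_def induction_holds_def sat_inst sat_subst zero_tm_def)
qed

lemma sat_ind_renaming:
  assumes "finite S" "S = fv \<phi> - {x}" "\<forall>v\<in>S. e v = f (rank S v)"
  shows "sat D F P (case_nat d (\<lambda>n. if n < card S then f n else e0 (n - card S)))
           (subst (ind_renaming x S) \<phi>) = sat D F P (e(x := d)) \<phi>"
  unfolding sat_subst
proof (rule sat_cong_env)
  fix v assume "v \<in> fv \<phi>"
  then show "tval F (case_nat d (\<lambda>n. if n < card S then f n else e0 (n - card S))) (ind_renaming x S v)
      = (e(x := d)) v"
    using assms rank_less_card[OF assms(1), of v] by (auto simp: ind_renaming_def)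
qed

lemma sat_ind_ax:
  assumes "is_structure D F"
  shows "sat D F P e0 (ind_ax z s x \<phi>) \<longleftrightarrow>
    (\<forall>e. range e \<subseteq> D \<longrightarrow> induction_holds D F z s (\<lambda>d. sat D F P (e(x := d)) \<phi>))"
    (is "_ \<longleftrightarrow> (\<forall>e. _ \<longrightarrow> ?ind e)")
proof -
  define S where "S = fv \<phi> - {x}"
  have S: "finite S" "S = fv \<phi> - {x}" by (simp_all add: S_def)
  have "sat D F P e0 (ind_ax z s x \<phi>) \<longleftrightarrow> (\<forall>f. (\<forall>i<card S. f i \<in> D) \<longrightarrow>
    induction_holds D F z s (\<lambda>d. sat D F P (case_nat d (\<lambda>n. if n < card S then f n else e0 (n - card S)))
      (subst (ind_renaming x S) \<phi>)))"
    by (simp only: ind_ax_eq sat_alls sat_ind_matrix S_def)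
  also have "\<dots> \<longleftrightarrow> (\<forall>e. range e \<subseteq> D \<longrightarrow> ?ind e)"
  proof safe
    fix e :: "nat \<Rightarrow> _" assume all: "\<forall>f. (\<forall>i<card S. f i \<in> D) \<longrightarrow> induction_holds D F z s
      (\<lambda>d. sat D F P (case_nat d (\<lambda>n. if n < card S then f n else e0 (n - card S))) (subst (ind_renaming x S) \<phi>))"
      and e: "range e \<subseteq> D"
    let ?f = "\<lambda>i. e (inv_into S (rank S) i)"
    have eq: "\<forall>v\<in>S. e v = ?f (rank S v)" using inv_into_f_f[OF inj_on_rank[OF S(1)]] by simp
    have "\<forall>i<card S. ?f i \<in> D" using e by auto
    then have "induction_holds D F z s (\<lambda>d. sat D F P
      (case_nat d (\<lambda>n. if n < card S then ?f n else e0 (n - card S))) (subst (ind_renaming x S) \<phi>))"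
      by (rule HOL.mp[OF spec[OF all, of ?f]])
    moreover have "sat D F P (case_nat d (\<lambda>n. if n < card S then ?f n else e0 (n - card S)))
        (subst (ind_renaming x S) \<phi>) = sat D F P (e(x := d)) \<phi>" for d
      by (rule sat_ind_renaming[OF S eq])
    ultimately show "?ind e" by simp
  next
    fix f assume all: "\<forall>e. range e \<subseteq> D \<longrightarrow> ?ind e" and f: "\<forall>i<card S. f i \<in> D"
    obtain d0 where "d0 \<in> D" using assms by (auto simp: is_structure_def)
    let ?e = "\<lambda>v. if v \<in> S then f (rank S v) else d0"
    have "range ?e \<subseteq> D" using f \<open>d0 \<in> D\<close> rank_less_card[OF S(1)] by auto
    then show "induction_holds D F z s (\<lambda>d. sat D F P (case_nat d (\<lambda>n. if n < card S then f n else e0 (n - card S)))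
      (subst (ind_renaming x S) \<phi>))"
      using all by (auto simp: sat_ind_renaming[OF S, of ?e])
  qed
  finally show ?thesis .
qed

corollary models_ind_ax:
  assumes "is_structure D F"
  shows "models D F P (ind_ax z s x \<phi>) \<longleftrightarrow>
    (\<forall>e. range e \<subseteq> D \<longrightarrow> induction_holds D F z s (\<lambda>d. sat D F P (e(x := d)) \<phi>))"
proof -
  obtain d0 where "d0 \<in> D" using assms by (auto simp: is_structure_def)
  then have "range (\<lambda>_. d0) \<subseteq> D" by auto
  then show ?thesis using sat_ind_ax[OF assms] by (auto simp: models_def)
qed

lemma fv_ind_ax: "fv (ind_ax z s x \<phi>) = {}"
proof -
  define S where "S = fv \<phi> - {x}"
  define \<psi> :: "('a, 'b) fm" where "\<psi> = subst (ind_renaming x S) \<phi>"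
  have "fv_tm (ind_renaming x S v) \<subseteq> {..card S}" if "v \<in> fv \<phi>" for v
    using that rank_less_card[of S v] by (auto simp: ind_renaming_def S_def)
  then have \<psi>: "fv \<psi> \<subseteq> {..card S}" by (auto simp: \<psi>_def fv_subst)
  then have "fv (subst (scons (suc_tm s (Var 0)) (\<lambda>n. Var (Suc n))) \<psi>) \<subseteq> {..card S}"
    by (auto simp: fv_subst suc_tm_def scons_def split: nat.splits)
  with \<psi> have "fv (ind_matrix z s \<psi>) \<subseteq> {..<card S}"
    by (auto simp: ind_matrix_def fv_inst zero_tm_def)
  then show ?thesis by (auto simp: ind_ax_eq fv_alls S_def \<psi>_def)
qed

lemma syms_ind_ax: "syms (ind_ax z s x \<phi>) \<subseteq> syms \<phi> \<union> {FS (Sym z) 0, FS (Sym s) 1}"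
proof -
  let ?\<psi> = "subst (ind_renaming x (fv \<phi> - {x})) \<phi>"
  have \<psi>: "syms ?\<psi> = syms \<phi>" by (auto simp: syms_subst ind_renaming_def split: if_splits)
  have "syms_tm (scons (suc_tm s (Var 0)) (\<lambda>n. Var (Suc n)) n) \<subseteq> {FS (Sym s) 1}" for n
    by (cases n) (auto simp: suc_tm_def)
  then have "syms (subst (scons (suc_tm s (Var 0)) (\<lambda>n. Var (Suc n))) ?\<psi>) \<subseteq> syms \<phi> \<union> {FS (Sym s) 1}"
    unfolding syms_subst[of _ ?\<psi>] \<psi> by blast
  moreover have "syms (inst (zero_tm z) ?\<psi>) \<subseteq> syms \<phi> \<union> {FS (Sym z) 0}"
    using \<psi> by (auto simp: syms_inst zero_tm_def)
  ultimately show ?thesis unfolding ind_ax_eq ind_matrix_def using \<psi> by auto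
qed

lemma induction_holds_ground_subst:
  assumes "is_structure D F" "\<forall>v. \<sigma> v = Var v \<or> fv_tm (\<sigma> v) = {}"
    and "\<forall>e. range e \<subseteq> D \<longrightarrow> induction_holds D F z s (\<lambda>d. sat D F P (e(x := d)) \<gamma>)"
    and "range e \<subseteq> D"
  shows "induction_holds D F z s (\<lambda>d. sat D F P (e(x := d)) (subst \<sigma> \<gamma>))"
proof (cases "\<sigma> x = Var x")
  case True
  let ?e = "\<lambda>v. tval F e (\<sigma> v)"
  have "range ?e \<subseteq> D" using tval_in_dom[OF assms(1,4)] by auto
  moreover have "sat D F P (e(x := d)) (subst \<sigma> \<gamma>) = sat D F P (?e(x := d)) \<gamma>" for d
    unfolding sat_subst
  proof (rule sat_cong_env)
    fix v
    show "tval F (e(x := d)) (\<sigma> v) = (?e(x := d)) v"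
    proof (cases "v = x \<or> \<sigma> v = Var v")
      case False
      then have "fv_tm (\<sigma> v) = {}" using assms(2) by blast
      then have "tval F (e(x := d)) (\<sigma> v) = tval F e (\<sigma> v)" by (intro tval_cong) auto
      then show ?thesis using False by simp
    qed (use True in auto)
  qed
  ultimately show ?thesis using assms(3) by simp
next
  case False
  have "x \<notin> fv_tm (\<sigma> v)" for v using assms(2) False by (metis empty_iff fv_tm.simps(1) singletonD)
  then have "x \<notin> fv (subst \<sigma> \<gamma>)" by (simp add: fv_subst)
  then have "sat D F P (e(x := d)) (subst \<sigma> \<gamma>) = sat D F P e (subst \<sigma> \<gamma>)" for d
    by (intro sat_cong_env) auto
  then show ?thesis by (simp add: induction_holds_def)
qed

lemma (in term_model) induction_holds_if_ground_instances:
  assumes "\<And>\<sigma>. (\<And>v. v \<in> fv \<gamma> - {x} \<Longrightarrow> \<sigma> v \<in> ground_terms K) \<Longrightarrow> (\<And>v. v \<notin> fv \<gamma> - {x} \<Longrightarrow> \<sigma> v = Var v)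
      \<Longrightarrow> models tdom tfun tpred (ind_ax z s x (subst \<sigma> \<gamma>))"
    and "range e \<subseteq> tdom"
  shows "induction_holds tdom tfun z s (\<lambda>d. sat tdom tfun tpred (e(x := d)) \<gamma>)"
proof -
  have "\<forall>v. \<exists>t. t \<in> ground_terms K \<and> e v = eq_class t"
    using assms(2) by (auto simp: tdom_def)
  then obtain tv where tv: "\<And>v. tv v \<in> ground_terms K \<and> e v = eq_class (tv v)" by metis
  define \<sigma> where "\<sigma> v = (if v \<in> fv \<gamma> - {x} then tv v else Var v)" for v
  have "models tdom tfun tpred (ind_ax z s x (subst \<sigma> \<gamma>))"
    using tv by (intro assms(1)) (auto simp: \<sigma>_def)
  then have "induction_holds tdom tfun z s (\<lambda>d. sat tdom tfun tpred (e(x := d)) (subst \<sigma> \<gamma>))"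
    using assms(2) by (simp add: models_ind_ax[OF is_structure_term_model])
  moreover have "sat tdom tfun tpred (e(x := d)) (subst \<sigma> \<gamma>) = sat tdom tfun tpred (e(x := d)) \<gamma>" for d
    unfolding sat_subst by (rule sat_cong_env) (use tv in \<open>auto simp: \<sigma>_def tval_term_model\<close>)
  ultimately show ?thesis by simp
qed

section \<open>Henkin axioms\<close>

definition henkin_ax :: "('f, 'p) fm \<Rightarrow> ('f, 'p) fm" where
  "henkin_ax B = Imp (Ex B) (inst (Fn (Sk QEx B) []) B)"

lemma Sk_QEx_in_sk_syms: "Ex B \<in> sentences (L \<union> sk_syms L) \<Longrightarrow> FS (Sk QEx B) 0 \<in> sk_syms L"
  using Sk_in_sk_syms[of B L QEx] by (simp add: sentences_def)

lemma henkin_ax_sentences: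
  "Ex B \<in> sentences (L \<union> sk_syms L) \<Longrightarrow> henkin_ax B \<in> sentences (L \<union> sk_syms L)"
  using Sk_QEx_in_sk_syms[of B L] by (auto simp: henkin_ax_def sentences_def fv_inst syms_inst)

lemma Sk_not_in_syms_if_size_le: "size B' \<le> size B \<Longrightarrow> FS (Sk Q B) n \<notin> syms B'"
  using size_syms[of "Sk Q B" n B'] by auto

lemma Sk_fresh_for_Henkin_axioms:
  assumes "skolem_free L" "X \<subseteq> sentences L" "Ex B \<in> sentences (L \<union> sk_syms L)"
    and "\<forall>B'\<in>Bs. Ex B' \<in> sentences (L \<union> sk_syms L) \<and> B' \<noteq> B \<and> size B' \<le> size B"
  shows "\<forall>A\<in>X \<union> henkin_ax ` Bs. fv A = {} \<and> FS (Sk QEx B) 0 \<notin> syms A"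
proof
  fix A assume A: "A \<in> X \<union> henkin_ax ` Bs"
  show "fv A = {} \<and> FS (Sk QEx B) 0 \<notin> syms A"
  proof (cases "A \<in> X")
    case True
    moreover have "FS (Sk QEx B) 0 \<in> sk_syms L" using assms(3) by (rule Sk_QEx_in_sk_syms)
    ultimately show ?thesis using assms(1,2) by (auto simp: skolem_free_def sentences_def)
  next
    case False
    then obtain B' where B': "B' \<in> Bs" "A = henkin_ax B'" using A by blast
    then have "B' \<noteq> B" "FS (Sk QEx B) 0 \<notin> syms B'"
      using assms(4) Sk_not_in_syms_if_size_le[of B' B QEx 0] by auto
    moreover have "A \<in> sentences (L \<union> sk_syms L)" using B' assms(4) henkin_ax_sentences by blast
    ultimately show ?thesis using B' by (auto simp: henkin_ax_def syms_inst sentences_def)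
  qed
qed

lemma consistent_Henkin_axioms_finite:
  assumes "skolem_free L" "X \<subseteq> sentences L" "\<not> inconsistent X"
    and "finite Bs" "\<forall>B\<in>Bs. Ex B \<in> sentences (L \<union> sk_syms L)"
  shows "\<not> inconsistent (X \<union> henkin_ax ` Bs)"
  using assms(4,5)
proof (induction Bs rule: finite_ranking_induct[where f = size])
  case empty
  then show ?case using assms(3) by simp
next
  text \<open>Adding the axiom of a largest \<open>B\<close> last keeps its witness \<open>Sk QEx B\<close> fresh.\<close>
  case (insert B Bs)
  show ?case
  proof (cases "B \<in> Bs")
    case False
    have B: "Ex B \<in> sentences (L \<union> sk_syms L)" and Bs: "\<forall>B\<in>Bs. Ex B \<in> sentences (L \<union> sk_syms L)"
      using insert.prems by simp_all
    then have fresh: "\<forall>A\<in>X \<union> henkin_ax ` Bs. fv A = {} \<and> FS (Sk QEx B) 0 \<notin> syms A"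
      using False insert.hyps(2) by (intro Sk_fresh_for_Henkin_axioms[OF assms(1,2)]) auto
    have "fv (Ex B) = {}" using B by (simp add: sentences_def)
    moreover have "FS (Sk QEx B) 0 \<notin> syms B" by (rule Sk_not_in_syms_if_size_le) simp
    ultimately have "\<not> inconsistent (insert (henkin_ax B) (X \<union> henkin_ax ` Bs))"
      unfolding henkin_ax_def[of B] using insert.IH[OF Bs] by (rule consistent_insert_Henkin_axiom[OF fresh])
    then show ?thesis by simp
  qed (use insert in simp)
qed

lemma consistent_Henkin_axioms:
  assumes "skolem_free L" "X \<subseteq> sentences L" "\<not> inconsistent X"
  shows "\<not> inconsistent (X \<union> henkin_ax ` {B. Ex B \<in> sentences (L \<union> sk_syms L)})"
proof
  let ?H = "{B. Ex B \<in> sentences (L \<union> sk_syms L)}"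
  assume "inconsistent (X \<union> henkin_ax ` ?H)"
  from inconsistent_finite_subset[OF this] obtain T0
    where T0: "T0 \<subseteq> X \<union> henkin_ax ` ?H" "finite T0" "inconsistent T0"
    by blast
  have sub: "T0 \<inter> henkin_ax ` ?H \<subseteq> henkin_ax ` ?H" by blast
  have fin: "finite (T0 \<inter> henkin_ax ` ?H)" using T0(2) by blast
  from finite_subset_image[OF fin sub] obtain Bs
    where Bs: "Bs \<subseteq> ?H" "finite Bs" "T0 \<inter> henkin_ax ` ?H = henkin_ax ` Bs"
    by blast
  have "T0 \<subseteq> X \<union> henkin_ax ` Bs" using T0(1) Bs(3) by blast
  then have "inconsistent (X \<union> henkin_ax ` Bs)" using T0(3) inconsistent_mono by blast
  then show False using consistent_Henkin_axioms_finite[OF assms Bs(2)] Bs(1) by blast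
qed

lemma (in term_model) henkin_if_Henkin_axioms:
  assumes "\<And>B. Ex B \<in> sentences K \<Longrightarrow> henkin_ax B \<in> M \<and> Fn (Sk QEx B) [] \<in> ground_terms K"
  shows henkin
  unfolding henkin_def
proof (intro allI impI)
  fix A assume A: "Ex A \<in> M"
  then have "Ex A \<in> sentences K" using sentences by blast
  moreover from this have "prov M (inst (Fn (Sk QEx A) []) A)"
    using A assms by (auto simp: henkin_ax_def intro: prov.mp prov.hyp)
  ultimately show "\<exists>t\<in>ground_terms K. inst t A \<in> M"
    using assms by (auto intro: mem_if_prov inst_sentences)
qed

lemma Henkin_extension:
  assumes "skolem_free L" "X \<subseteq> sentences L" "\<not> inconsistent X"
  obtains M where "X \<subseteq> M" "max_consistent (L \<union> sk_syms L) M"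
    and "\<And>B. Ex B \<in> sentences (L \<union> sk_syms L) \<Longrightarrow> henkin_ax B \<in> M"
proof -
  let ?K = "L \<union> sk_syms L"
  let ?H = "X \<union> henkin_ax ` {B. Ex B \<in> sentences ?K}"
  have "X \<subseteq> sentences ?K" using assms(2) by (auto simp: sentences_def)
  moreover have "henkin_ax ` {B. Ex B \<in> sentences ?K} \<subseteq> sentences ?K"
    by (rule image_subsetI) (simp add: henkin_ax_sentences)
  ultimately have "?H \<subseteq> sentences ?K" by (rule Un_least)
  from Lindenbaum[OF this consistent_Henkin_axioms[OF assms]]
  obtain M where "?H \<subseteq> M" "max_consistent ?K M" by blast
  then show thesis by (intro that) auto
qed

theorem consistent_has_Skolem_model:
  fixes X :: "('f, 'p) fm set"
  assumes "skolem_free L" "X \<subseteq> sentences L" "\<not> inconsistent X"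
  obtains D :: "('f, 'p) tm set set" and F P
  where "is_structure D F" "\<forall>A\<in>X. models D F P A"
    and "\<And>Q B. FS (Sk Q B) (card {n. Suc n \<in> fv B}) \<in> sk_syms L \<Longrightarrow> is_skolem_fun D F P Q B"
proof -
  let ?K = "L \<union> sk_syms L"
  obtain M where M: "X \<subseteq> M" "max_consistent ?K M" "\<And>B. Ex B \<in> sentences ?K \<Longrightarrow> henkin_ax B \<in> M"
    using Henkin_extension[OF assms] by blast
  have witness: "Fn (Sk QEx B) [] \<in> ground_terms ?K" if "Ex B \<in> sentences ?K" for B
    using Sk_QEx_in_sk_syms[OF that] by (simp add: ground_terms_def ground_L_term_def)
  have "Ex (Eq (Var 0) (Var 0)) \<in> sentences ?K" by (simp add: sentences_def)
  then interpret term_model ?K M "Fn (Sk QEx (Eq (Var 0) (Var 0))) []"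
    by unfold_locales (use M(2) witness in simp_all)
  have henkin using M(3) witness by (intro henkin_if_Henkin_axioms) simp
  let ?F = "exp_fun tdom tfun tpred L"
  show thesis
  proof
    show "is_structure tdom ?F" by (rule is_structure_exp[OF is_structure_term_model])
    show "\<forall>A\<in>X. models tdom ?F tpred A"
    proof
      fix A assume "A \<in> X"
      then have "syms A \<subseteq> L" "models tdom tfun tpred A"
        using models_if_mem M(1) \<open>henkin\<close> assms(2) by (auto simp: sentences_def)
      then show "models tdom ?F tpred A" by (simp add: models_exp)
    qed
    show "is_skolem_fun tdom ?F tpred Q B" if "FS (Sk Q B) (card {n. Suc n \<in> fv B}) \<in> sk_syms L" for Q B
      using that assms(1) by (intro is_skolem_fun_exp is_structure_term_model) (auto simp: skolem_free_def)
  qed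
qed

lemma finite_subset_mono_chain:
  fixes f :: "nat \<Rightarrow> 'a set"
  assumes "finite S" "S \<subseteq> (\<Union>i. f i)" "mono f"
  shows "\<exists>i. S \<subseteq> f i"
  using assms(1,2)
proof (induction S rule: finite_induct)
  case (insert a S)
  then obtain i j where "S \<subseteq> f i" "a \<in> f j" by blast
  moreover have "f i \<subseteq> f (max i j)" "f j \<subseteq> f (max i j)" using monoD[OF assms(3)] by auto
  ultimately show ?case by blast
qed simp

context
  fixes L :: "('f, 'p) lsym set" and T \<Gamma> :: "('f, 'p) fm set" and z s :: 'f
  assumes zero_in_L: "FS (Sym z) 0 \<in> L" and suc_in_L: "FS (Sym s) 1 \<in> L"
    and T_in_L: "is_L_theory L T" and \<Gamma>_in_L: "\<forall>\<gamma>\<in>\<Gamma>. is_L_formula L \<gamma>"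
begin

definition stage :: "nat \<Rightarrow> ('f, 'p) lsym set \<times> ('f, 'p) fm set" where
  "stage i = (GSI_step z s \<Gamma> ^^ i) (sk_ex_theory L T)"

definition new_axioms :: "('f, 'p) lsym set \<Rightarrow> ('f, 'p) fm set" where
  "new_axioms L' = sk_ex (IND z s (at_most_one_fv (ground_inst \<Gamma> L')))"

text \<open>An over-approximation of the axioms of all stages, in which the ground terms may use every
  Skolem symbol over \<open>L\<close> and the instance may have more than one free variable.\<close>

definition GSI_axiom :: "('f, 'p) fm \<Rightarrow> bool" where
  "GSI_axiom A \<longleftrightarrow> A \<in> sk_ex T \<or> (\<exists>x \<gamma> \<sigma>. \<gamma> \<in> \<Gamma> \<and>
     (\<forall>v. \<sigma> v = Var v \<or> ground_L_term (L \<union> sk_syms L) (\<sigma> v)) \<and> A = sk QEx (ind_ax z s x (subst \<sigma> \<gamma>)))"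

lemma stage_0: "stage 0 = (L \<union> (\<Union>A\<in>sk_ex T. syms A), sk_ex T)"
  by (simp add: stage_def sk_ex_theory_def)

lemma stage_Suc:
  "stage (Suc i) = (fst (stage i) \<union> (\<Union>A\<in>new_axioms (fst (stage i)). syms A),
                    snd (stage i) \<union> new_axioms (fst (stage i)))"
  by (simp add: stage_def GSI_step_def new_axioms_def Let_def)

lemma GSI_omega_stages: "GSI_omega z s \<Gamma> (sk_ex_theory L T) = (\<Union>i. snd (stage i))"
  by (simp add: GSI_omega_def stage_def)

lemma mono_stage_language: "mono (\<lambda>i. fst (stage i))"
  unfolding mono_iff_le_Suc by (auto simp: stage_Suc)

lemma IND_sentences: "T \<union> IND z s \<Gamma> \<subseteq> sentences L"
proof
  fix A assume "A \<in> T \<union> IND z s \<Gamma>"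
  then consider "A \<in> T" | x \<gamma> where "\<gamma> \<in> \<Gamma>" "A = ind_ax z s x \<gamma>" by (auto simp: IND_def)
  then show "A \<in> sentences L"
  proof cases
    case 2
    then show ?thesis using \<Gamma>_in_L syms_ind_ax[of z s x \<gamma>] fv_ind_ax[of z s x \<gamma>] zero_in_L suc_in_L
      by (auto simp: sentences_def is_L_formula_def)
  qed (use T_in_L in \<open>auto simp: is_L_theory_def is_L_formula_def sentences_def\<close>)
qed

lemma ind_ax_ground_subst_sentences:
  assumes "\<gamma> \<in> \<Gamma>" "\<forall>v. \<sigma> v = Var v \<or> ground_L_term (L \<union> sk_syms L) (\<sigma> v)"
  shows "ind_ax z s x (subst \<sigma> \<gamma>) \<in> sentences (L \<union> sk_syms L)"
proof -
  have "syms_tm (\<sigma> v) \<subseteq> L \<union> sk_syms L" for v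
    using assms(2)[rule_format, of v] by (auto simp: ground_L_term_def)
  moreover have "syms \<gamma> \<subseteq> L" using \<Gamma>_in_L assms(1) by (simp add: is_L_formula_def)
  ultimately have "syms (subst \<sigma> \<gamma>) \<subseteq> L \<union> sk_syms L" by (auto simp: syms_subst)
  then show ?thesis
    using syms_ind_ax[of z s x "subst \<sigma> \<gamma>"] fv_ind_ax[of z s x "subst \<sigma> \<gamma>"] zero_in_L suc_in_L
    by (auto simp: sentences_def)
qed

lemma new_axiom_GSI_axiom:
  assumes "L' \<subseteq> L \<union> sk_syms L" "A \<in> new_axioms L'"
  shows "GSI_axiom A \<and> A \<in> sentences (L \<union> sk_syms L)"
proof -
  obtain x \<gamma> \<sigma> where \<gamma>: "\<gamma> \<in> \<Gamma>" "\<forall>v. \<sigma> v = Var v \<or> ground_L_term L' (\<sigma> v)"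
    and A: "A = sk QEx (ind_ax z s x (subst \<sigma> \<gamma>))"
    using assms(2) by (auto simp: new_axioms_def sk_ex_def IND_def at_most_one_fv_def ground_inst_def)
  then have \<sigma>: "\<forall>v. \<sigma> v = Var v \<or> ground_L_term (L \<union> sk_syms L) (\<sigma> v)"
    using assms(1) by (auto simp: ground_L_term_def)
  then have "ind_ax z s x (subst \<sigma> \<gamma>) \<in> sentences (L \<union> sk_syms L)"
    using \<gamma>(1) by (rule ind_ax_ground_subst_sentences[rotated])
  then have "A \<in> sentences (L \<union> sk_syms L)"
    using fv_sk[of QEx "ind_ax z s x (subst \<sigma> \<gamma>)"] syms_sk[of _ L QEx] by (auto simp: A sentences_def)
  moreover have "GSI_axiom A" using \<gamma>(1) \<sigma> A by (auto simp: GSI_axiom_def)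
  ultimately show ?thesis by blast
qed

lemma stage_invariant:
  "L \<subseteq> fst (stage i) \<and> fst (stage i) \<subseteq> L \<union> sk_syms L \<and> snd (stage i) \<subseteq> sentences (fst (stage i)) \<and>
   (\<forall>A\<in>snd (stage i). GSI_axiom A)"
proof (induction i)
  case 0
  have "sk QEx A \<in> sentences (L \<union> sk_syms L)" if "A \<in> T" for A
    using T_in_L that fv_sk[of QEx A] syms_sk[of A L QEx]
    by (auto simp: is_L_theory_def is_L_formula_def sentences_def)
  then show ?case by (auto simp: stage_0 sentences_def sk_ex_def GSI_axiom_def)
next
  case (Suc i)
  then have "GSI_axiom A \<and> A \<in> sentences (L \<union> sk_syms L)" if "A \<in> new_axioms (fst (stage i))" for A
    using that by (intro new_axiom_GSI_axiom) auto
  then show ?case using Suc by (auto simp: stage_Suc sentences_def)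
qed

lemma GSI_axiom_if_mem: "A \<in> GSI_omega z s \<Gamma> (sk_ex_theory L T) \<Longrightarrow> GSI_axiom A"
  using stage_invariant by (auto simp: GSI_omega_stages)

lemma models_GSI_axiom:
  assumes "is_structure D F" "\<forall>A\<in>T \<union> IND z s \<Gamma>. models D F P A"
    and "\<And>Q B. FS (Sk Q B) (card {n. Suc n \<in> fv B}) \<in> sk_syms L \<Longrightarrow> is_skolem_fun D F P Q B"
    and "GSI_axiom A"
  shows "models D F P A"
proof -
  have sk: "models D F P (sk QEx B)" if "models D F P B" "syms B \<subseteq> L \<union> sk_syms L" for B
    using that sat_sk_if_skolem_funs[OF assms(1,3), where A=B] by (auto simp: models_def)
  consider A0 where "A0 \<in> T" "A = sk QEx A0"
    | x \<gamma> \<sigma> where "\<gamma> \<in> \<Gamma>" "\<forall>v. \<sigma> v = Var v \<or> ground_L_term (L \<union> sk_syms L) (\<sigma> v)"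
      "A = sk QEx (ind_ax z s x (subst \<sigma> \<gamma>))"
    using assms(4) by (auto simp: GSI_axiom_def sk_ex_def)
  then show ?thesis
  proof cases
    case 1
    then show ?thesis using assms(2) IND_sentences sk[of A0] by (auto simp: sentences_def)
  next
    case 2
    then have "ind_ax z s x \<gamma> \<in> IND z s \<Gamma>" by (auto simp: IND_def)
    then have "models D F P (ind_ax z s x \<gamma>)" using assms(2) by blast
    moreover have "\<forall>v. \<sigma> v = Var v \<or> fv_tm (\<sigma> v) = {}" using 2(2) by (auto simp: ground_L_term_def)
    ultimately have "models D F P (ind_ax z s x (subst \<sigma> \<gamma>))"
      using induction_holds_ground_subst[OF assms(1)] by (simp add: models_ind_ax[OF assms(1)])
    then show ?thesis
      using 2 sk ind_ax_ground_subst_sentences[of \<gamma> \<sigma> x] by (simp add: sentences_def)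
  qed
qed

theorem consistent_GSI_omega_if_consistent_IND:
  assumes "skolem_free L" "\<not> inconsistent (T \<union> IND z s \<Gamma>)"
  shows "\<not> inconsistent (GSI_omega z s \<Gamma> (sk_ex_theory L T))"
proof -
  obtain D :: "('f, 'p) tm set set" and F P where "is_structure D F" "\<forall>A\<in>T \<union> IND z s \<Gamma>. models D F P A"
    and "\<And>Q B. FS (Sk Q B) (card {n. Suc n \<in> fv B}) \<in> sk_syms L \<Longrightarrow> is_skolem_fun D F P Q B"
    by (rule consistent_has_Skolem_model[OF assms(1) IND_sentences assms(2)]) (rule that)
  then have "\<forall>A\<in>GSI_omega z s \<Gamma> (sk_ex_theory L T). models D F P A"
    using models_GSI_axiom GSI_axiom_if_mem by blast
  then show ?thesis using consistent_if_model[OF \<open>is_structure D F\<close>] by blast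
qed

lemma ground_instance_in_GSI_omega:
  assumes "\<gamma> \<in> \<Gamma>" "\<And>v. v \<in> fv \<gamma> - {x} \<Longrightarrow> ground_L_term (\<Union>i. fst (stage i)) (\<sigma> v)"
    and "\<And>v. v \<notin> fv \<gamma> - {x} \<Longrightarrow> \<sigma> v = Var v"
  shows "sk QEx (ind_ax z s x (subst \<sigma> \<gamma>)) \<in> GSI_omega z s \<Gamma> (sk_ex_theory L T)"
proof -
  have "finite (\<Union>v\<in>fv \<gamma> - {x}. syms_tm (\<sigma> v))" by (simp add: finite_syms_tm)
  moreover have "(\<Union>v\<in>fv \<gamma> - {x}. syms_tm (\<sigma> v)) \<subseteq> (\<Union>i. fst (stage i))"
    using assms(2) by (auto simp: ground_L_term_def)
  ultimately obtain i where i: "(\<Union>v\<in>fv \<gamma> - {x}. syms_tm (\<sigma> v)) \<subseteq> fst (stage i)"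
    using finite_subset_mono_chain[OF _ _ mono_stage_language] by blast
  have "\<sigma> v = Var v \<or> ground_L_term (fst (stage i)) (\<sigma> v)" for v
    using assms(2)[of v] assms(3)[of v] i by (cases "v \<in> fv \<gamma> - {x}") (auto simp: ground_L_term_def)
  moreover have "fv_tm (\<sigma> v) \<subseteq> {x}" if "v \<in> fv \<gamma>" for v
    using that assms(2)[of v] assms(3)[of v] by (cases "v = x") (auto simp: ground_L_term_def)
  then have "fv (subst \<sigma> \<gamma>) \<subseteq> {x}" by (auto simp: fv_subst)
  then have "card (fv (subst \<sigma> \<gamma>)) \<le> 1"
    using card_mono[of "{x}" "fv (subst \<sigma> \<gamma>)"] by simp
  ultimately have "subst \<sigma> \<gamma> \<in> at_most_one_fv (ground_inst \<Gamma> (fst (stage i)))"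
    using assms(1) by (auto simp: at_most_one_fv_def ground_inst_def)
  then have "sk QEx (ind_ax z s x (subst \<sigma> \<gamma>)) \<in> snd (stage (Suc i))"
    by (auto simp: stage_Suc new_axioms_def sk_ex_def IND_def)
  then show ?thesis unfolding GSI_omega_stages by blast
qed

theorem consistent_IND_if_consistent_GSI_omega:
  assumes "\<not> inconsistent (GSI_omega z s \<Gamma> (sk_ex_theory L T))" (is "\<not> inconsistent ?G")
  shows "\<not> inconsistent (T \<union> IND z s \<Gamma>)"
proof -
  define K where "K = (\<Union>i. fst (stage i))"
  have "?G \<subseteq> sentences K"
    using stage_invariant by (fastforce simp: GSI_omega_stages K_def sentences_def)
  from Lindenbaum[OF this assms] obtain M where M: "?G \<subseteq> M" "max_consistent K M" by blast
  have "Fn (Sym z) [] \<in> ground_terms K"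
    using zero_in_L stage_invariant[of 0] by (auto simp: K_def ground_terms_def ground_L_term_def)
  then interpret term_model K M "Fn (Sym z) []" by unfold_locales (use M(2) in simp_all)
  have G: "models tdom tfun tpred A" if A: "A \<in> ?G" for A
  proof -
    obtain B where "A = sk QEx B" using GSI_axiom_if_mem[OF A] by (auto simp: GSI_axiom_def sk_ex_def)
    then show ?thesis using A M(1) universal_sk[of QEx B] by (intro models_if_mem) auto
  qed
  have sk: "models tdom tfun tpred B" if "sk QEx B \<in> ?G" for B
    using G[OF that] sat_sk[OF is_structure_term_model] by (auto simp: models_def)
  have "models tdom tfun tpred A" if "A \<in> T" for A
  proof (rule sk)
    have "sk QEx A \<in> snd (stage 0)" using that by (simp add: stage_0 sk_ex_def)
    then show "sk QEx A \<in> ?G" unfolding GSI_omega_stages by blast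
  qed
  moreover have "models tdom tfun tpred (ind_ax z s x \<gamma>)" if \<gamma>: "\<gamma> \<in> \<Gamma>" for x \<gamma>
  proof -
    have "induction_holds tdom tfun z s (\<lambda>d. sat tdom tfun tpred (e(x := d)) \<gamma>)" if "range e \<subseteq> tdom" for e
    proof (rule induction_holds_if_ground_instances[OF _ that])
      fix \<sigma> :: "nat \<Rightarrow> ('f, 'p) tm"
      assume "\<And>v. v \<in> fv \<gamma> - {x} \<Longrightarrow> \<sigma> v \<in> ground_terms K" "\<And>v. v \<notin> fv \<gamma> - {x} \<Longrightarrow> \<sigma> v = Var v"
      then have "sk QEx (ind_ax z s x (subst \<sigma> \<gamma>)) \<in> ?G"
        using \<gamma> by (intro ground_instance_in_GSI_omega) (auto simp: K_def ground_terms_def)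
      then show "models tdom tfun tpred (ind_ax z s x (subst \<sigma> \<gamma>))" by (rule sk)
    qed
    then show ?thesis by (simp add: models_ind_ax[OF is_structure_term_model])
  qed
  ultimately have "\<forall>A\<in>T \<union> IND z s \<Gamma>. models tdom tfun tpred A" by (auto simp: IND_def)
  then show ?thesis by (rule consistent_if_model[OF is_structure_term_model])
qed

end

theorem proposition14:
  fixes L :: "('f, 'p) lsym set" and T \<Gamma> :: "('f, 'p) fm set" and z s :: 'f
  assumes "skolem_free L"
    and "FS (Sym z) 0 \<in> L" and "FS (Sym s) 1 \<in> L"
    and "is_L_theory L T"
    and "\<forall>\<gamma>\<in>\<Gamma>. is_L_formula L \<gamma>"
  shows "inconsistent (GSI_omega z s \<Gamma> (sk_ex_theory L T))
         \<longleftrightarrow> inconsistent (T \<union> IND z s \<Gamma>)"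
  using consistent_GSI_omega_if_consistent_IND[OF assms(2-5,1)]
    consistent_IND_if_consistent_GSI_omega[OF assms(2-5)] by blast

end
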